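(* Let $d\ge1$ and let $LG(d,2d)$ be the Lagrangian Grassmannian of $d$-dimensional isotropic subspaces of $\mathbb C^{2d}$ equipped with a symplectic form. Let $U,V,W\in LG(d,2d)$ be pairwise in general position, i.e. $U\cap V=U\cap W=V\cap W=0$. Then there is a unique morphism $f\colon\mathbb P^1\to LG(d,2d)$ of degree $d$ with $f(0)=U$, $f(1)=V$, $f(\infty)=W$.
   Context: The degree of a morphism $f\colon\mathbb P^1\to LG(d,2d)$ is $\int f_*[\mathbb P^1]\cdot\sigma_1$, where $\sigma_1$ is the class of the Schubert divisor (the restriction of the Schubert divisor class of the ambient Grassmannian $G(d,2d)$). *)

theory Defs
  imports "HOL-Analysis.Analysis" "HOL-Computational_Algebra.Polynomial"
begin

definition cvec :: "nat \<Rightarrow> (nat \<Rightarrow> complex) set" where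
  "cvec n = {v. \<forall>i\<ge>n. v i = 0}"

definition detn :: "nat \<Rightarrow> (nat \<Rightarrow> nat \<Rightarrow> complex) \<Rightarrow> complex" where
  "detn n A = (\<Sum>p\<in>{p. p permutes {0..<n}}. of_int (sign p) * (\<Prod>i<n. A i (p i)))"

definition bform :: "nat \<Rightarrow> (nat \<Rightarrow> nat \<Rightarrow> complex) \<Rightarrow> (nat \<Rightarrow> complex) \<Rightarrow> (nat \<Rightarrow> complex) \<Rightarrow> complex" where
  "bform n om u v = (\<Sum>i<n. \<Sum>j<n. u i * om i j * v j)"

definition symplectic_form :: "nat \<Rightarrow> (nat \<Rightarrow> nat \<Rightarrow> complex) \<Rightarrow> bool" where
  "symplectic_form n om \<longleftrightarrow> (\<forall>i<n. om i i = 0) \<and> (\<forall>i<n. \<forall>j<n. om j i = - om i j)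
      \<and> detn n om \<noteq> 0"

definition lincomb :: "nat \<Rightarrow> (nat \<Rightarrow> complex) \<Rightarrow> (nat \<Rightarrow> nat \<Rightarrow> complex) \<Rightarrow> (nat \<Rightarrow> complex)" where
  "lincomb k c b = (\<lambda>i. \<Sum>j<k. c j * b j i)"

definition is_basis :: "nat \<Rightarrow> nat \<Rightarrow> (nat \<Rightarrow> complex) set \<Rightarrow> (nat \<Rightarrow> nat \<Rightarrow> complex) \<Rightarrow> bool" where
  "is_basis n k W b \<longleftrightarrow> (\<forall>j<k. b j \<in> cvec n)
     \<and> W = {v. \<exists>c. v = lincomb k c b}
     \<and> (\<forall>c. lincomb k c b = (\<lambda>_. 0) \<longrightarrow> (\<forall>j<k. c j = 0))"

definition in_LG :: "nat \<Rightarrow> (nat \<Rightarrow> nat \<Rightarrow> complex) \<Rightarrow> (nat \<Rightarrow> complex) set \<Rightarrow> bool" where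
  "in_LG d om W \<longleftrightarrow> (\<exists>b. is_basis (2*d) d W b) \<and> (\<forall>u\<in>W. \<forall>v\<in>W. bform (2*d) om u v = 0)"

definition plucker :: "nat \<Rightarrow> (nat \<Rightarrow> nat \<Rightarrow> complex) \<Rightarrow> nat set \<Rightarrow> complex" where
  "plucker d b I = detn d (\<lambda>r j. b j (sorted_list_of_set I ! r))"

definition psubsets :: "nat \<Rightarrow> nat set set" where
  "psubsets d = {I. I \<subseteq> {0..<2*d} \<and> card I = d}"

text \<open>Points of P^1: None = infinity, Some z = [1:z]. The point [s:t] (s,t not both 0).\<close>
definition p1pt :: "complex \<Rightarrow> complex \<Rightarrow> complex option" where
  "p1pt s t = (if s = 0 then None else Some (t / s))"

definition hom_eval :: "nat \<Rightarrow> complex poly \<Rightarrow> complex \<Rightarrow> complex \<Rightarrow> complex" where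
  "hom_eval e p s t = (\<Sum>k\<le>e. coeff p k * s ^ (e - k) * t ^ k)"

text \<open>f : P^1 -> G(d,2d) is a morphism of degree e: its Plucker coordinates are given by
  binary forms of degree e without common zero (the Schubert class sigma_1 is the
  hyperplane class of the Plucker embedding).\<close>
definition grass_morphism_deg :: "nat \<Rightarrow> (complex option \<Rightarrow> (nat \<Rightarrow> complex) set) \<Rightarrow> nat \<Rightarrow> bool" where
  "grass_morphism_deg d f e \<longleftrightarrow>
     (\<exists>P :: nat set \<Rightarrow> complex poly.
        (\<forall>I. degree (P I) \<le> e)
      \<and> (\<forall>s t. (s, t) \<noteq> (0, 0) \<longrightarrow> (\<exists>I\<in>psubsets d. hom_eval e (P I) s t \<noteq> 0))
      \<and> (\<forall>s t. (s, t) \<noteq> (0, 0) \<longrightarrow>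
           (\<exists>b. is_basis (2*d) d (f (p1pt s t)) b \<and>
                (\<forall>I\<in>psubsets d. plucker d b I = hom_eval e (P I) s t))))"

definition LG_morphism_deg :: "nat \<Rightarrow> (nat \<Rightarrow> nat \<Rightarrow> complex) \<Rightarrow> (complex option \<Rightarrow> (nat \<Rightarrow> complex) set) \<Rightarrow> nat \<Rightarrow> bool" where
  "LG_morphism_deg d om f e \<longleftrightarrow> grass_morphism_deg d f e \<and> (\<forall>x. in_LG d om (f x))"

end

theory Submission
  imports Defs "Jordan_Normal_Form.Determinant"
begin

text \<open>
  Since \<open>U \<inter> W = 0\<close>, the space splits as \<open>U \<oplus> W\<close>, and since \<open>V\<close> meets both summands
  trivially it has a basis \<open>a\<^sub>j + c\<^sub>j\<close> with \<open>(a\<^sub>j)\<close> a basis of \<open>U\<close> and \<open>(c\<^sub>j)\<close> a basis of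
  \<open>W\<close>. The curve \<open>z \<mapsto> span (a\<^sub>j + z c\<^sub>j)\<close>, \<open>\<infinity> \<mapsto> W\<close> has as Plucker coordinates binary
  forms of degree \<open>d\<close> without common zero, and it is Lagrangian because isotropy of \<open>U\<close>,
  \<open>W\<close> and \<open>V\<close> forces \<open>\<omega>(a\<^sub>j, c\<^sub>k) + \<omega>(c\<^sub>j, a\<^sub>k) = 0\<close>.

  For uniqueness, take bases \<open>B(s,t)\<close> realising a curve of degree \<open>d\<close> through \<open>U, V, W\<close>, and
  write \<open>B(1,z)\<close> in the coordinates of the splitting as a stacked matrix \<open>(X(z); Y(z))\<close>. By
  Cauchy-Binet every \<open>d \<times> d\<close> minor of it is a fixed combination of Plucker coordinates, hence a
  polynomial of degree at most \<open>d\<close> whose coefficient of \<open>z\<^sup>d\<close> is the same minor at \<open>\<infinity>\<close>, where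
  \<open>X = 0\<close> and \<open>Y\<close> is invertible. So the entries of \<open>X adj Y\<close> have degree at most \<open>d - 1\<close>,
  and comparing degrees in \<open>det (X adj Y) = det X \<cdot> (det Y)\<^sup>d\<^sup>-\<^sup>1\<close> shows that \<open>det X\<close> is a
  nonzero constant \<open>\<alpha>\<close>. Next \<open>Y adj X\<close> vanishes at \<open>0\<close>, so \<open>Y = z G(z) X\<close> for a polynomial
  matrix \<open>G\<close> with constant determinant \<open>\<gamma>\<close>; then \<open>(X adj Y) G = \<alpha> \<gamma> z\<^sup>d\<^sup>-\<^sup>1\<close> forces
  \<open>adj G\<close>, hence \<open>G\<close>, to be constant, and \<open>G = 1\<close> because the curve passes through \<open>V\<close>
  at \<open>z = 1\<close>. Thus \<open>Y = z X\<close>, i.e. the curve is the one above.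
\<close>

section \<open>Binary forms\<close>

lemma poly_eq_sum_upto:
  fixes p :: "'a::comm_semiring_1 poly"
  assumes "degree p \<le> e"
  shows "poly p x = (\<Sum>k\<le>e. coeff p k * x ^ k)"
proof -
  have "poly p x = poly (\<Sum>k\<le>e. monom (coeff p k) k) x"
    by (simp only: poly_as_sum_of_monoms'[OF assms])
  then show ?thesis by (simp add: poly_sum poly_monom)
qed

lemma hom_eval_eq_poly:
  assumes "degree p \<le> e" "s \<noteq> 0"
  shows "hom_eval e p s t = s ^ e * poly p (t / s)"
proof -
  have "s ^ e * poly p (t / s) = (\<Sum>k\<le>e. s ^ e * (coeff p k * (t / s) ^ k))"
    by (simp add: poly_eq_sum_upto[OF assms(1)] sum_distrib_left)
  also have "\<dots> = (\<Sum>k\<le>e. coeff p k * s ^ (e - k) * t ^ k)"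
  proof (rule sum.cong)
    fix k assume "k \<in> {..e}"
    then have "s ^ e = s ^ (e - k) * s ^ k" by (simp add: power_add[symmetric])
    then show "s ^ e * (coeff p k * (t / s) ^ k) = coeff p k * s ^ (e - k) * t ^ k"
      using assms(2) by (simp add: power_divide field_simps)
  qed simp
  finally show ?thesis by (simp add: hom_eval_def)
qed

lemma hom_eval_1: "degree p \<le> e \<Longrightarrow> hom_eval e p 1 z = poly p z"
  using hom_eval_eq_poly[of p e 1 z] by simp

lemma hom_eval_0: "hom_eval e p 0 t = coeff p e * t ^ e"
proof -
  have "hom_eval e p 0 t = (\<Sum>k\<in>{e}. coeff p k * 0 ^ (e - k) * t ^ k)"
    unfolding hom_eval_def by (rule sum.mono_neutral_right) auto
  then show ?thesis by simp
qed

lemma hom_eval_add: "hom_eval e (p + q) s t = hom_eval e p s t + hom_eval e q s t"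
  by (simp add: hom_eval_def algebra_simps sum.distrib)

lemma hom_eval_smult: "hom_eval e (Polynomial.smult a p) s t = a * hom_eval e p s t"
  by (simp add: hom_eval_def algebra_simps sum_distrib_left)

lemma hom_eval_sum: "hom_eval e (\<Sum>i\<in>S. p i) s t = (\<Sum>i\<in>S. hom_eval e (p i) s t)"
proof (induction S rule: infinite_finite_induct)
  case (insert x F)
  then show ?case by (simp add: hom_eval_add)
qed (simp_all add: hom_eval_def)

lemma hom_eval_linear: "hom_eval (Suc 0) [:x, y:] s t = s * x + t * y"
  by (simp add: hom_eval_def)

lemma coeff_mult_at_degree_bounds:
  assumes "degree p \<le> m" "degree q \<le> n"
  shows "coeff (p * q) (m + n) = coeff p m * coeff q n"
proof -
  have "coeff (p * q) (m + n) = (\<Sum>i\<le>m+n. coeff p i * coeff q (m + n - i))"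
    by (simp add: coeff_mult)
  also have "\<dots> = (\<Sum>i\<in>{m}. coeff p i * coeff q (m + n - i))"
  proof (rule sum.mono_neutral_right)
    show "\<forall>i\<in>{..m + n} - {m}. coeff p i * coeff q (m + n - i) = 0"
    proof
      fix i assume "i \<in> {..m + n} - {m}"
      then have "i > m \<or> m + n - i > n" by auto
      then show "coeff p i * coeff q (m + n - i) = 0" using assms by (auto simp: coeff_eq_0)
    qed
  qed auto
  finally show ?thesis by simp
qed

lemma hom_eval_mult:
  assumes "degree p \<le> m" "degree q \<le> n"
  shows "hom_eval (m + n) (p * q) s t = hom_eval m p s t * hom_eval n q s t"
proof (cases "s = 0")
  case True
  then show ?thesis
    using coeff_mult_at_degree_bounds[OF assms] by (simp add: hom_eval_0 power_add)
next
  case False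
  have "degree (p * q) \<le> m + n"
    using assms by (meson add_le_mono degree_mult_le order_trans)
  with False assms show ?thesis by (simp add: hom_eval_eq_poly power_add)
qed

lemma hom_eval_prod_linear:
  assumes "finite S" "\<And>i. i \<in> S \<Longrightarrow> degree (L i) \<le> 1"
  shows "degree (\<Prod>i\<in>S. L i) \<le> card S
    \<and> hom_eval (card S) (\<Prod>i\<in>S. L i) s t = (\<Prod>i\<in>S. hom_eval 1 (L i) s t)"
  using assms
proof (induction S rule: finite_induct)
  case empty
  then show ?case by (simp add: hom_eval_def)
next
  case (insert x F)
  then have IH: "degree (prod L F) \<le> card F"
    "hom_eval (card F) (prod L F) s t = (\<Prod>i\<in>F. hom_eval 1 (L i) s t)" by auto
  have Lx: "degree (L x) \<le> 1" using insert by auto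
  have "degree (L x * prod L F) \<le> 1 + card F"
    using degree_mult_le[of "L x" "prod L F"] Lx IH(1) by linarith
  moreover have "hom_eval (1 + card F) (L x * prod L F) s t
      = hom_eval 1 (L x) s t * hom_eval (card F) (prod L F) s t"
    by (rule hom_eval_mult[OF Lx IH(1)])
  ultimately show ?case using insert IH(2) by simp
qed

section \<open>Determinants\<close>

abbreviation jdet :: "'a::comm_ring_1 mat \<Rightarrow> 'a" where "jdet \<equiv> Determinant.det"

definition sqmat :: "nat \<Rightarrow> (nat \<Rightarrow> nat \<Rightarrow> 'a) \<Rightarrow> 'a mat" where
  "sqmat n A = Matrix.mat n n (\<lambda>(i, j). A i j)"

lemma sqmat_carrier [simp]: "sqmat n A \<in> carrier_mat n n"
  and sqmat_index [simp]: "i < n \<Longrightarrow> j < n \<Longrightarrow> sqmat n A $$ (i, j) = A i j"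
  and sqmat_dim [simp]: "dim_row (sqmat n A) = n" "dim_col (sqmat n A) = n"
  by (simp_all add: sqmat_def)

lemma detn_eq_det: "detn n A = jdet (sqmat n A)"
  unfolding detn_def det_def sqmat_def by (simp add: atLeast0LessThan)

lemma detn_cong: "(\<And>i j. i < n \<Longrightarrow> j < n \<Longrightarrow> A i j = B i j) \<Longrightarrow> detn n A = detn n B"
  unfolding detn_eq_det by (rule arg_cong[of _ _ jdet], rule eq_matI) auto

lemma detn_mult: "detn n (\<lambda>i j. \<Sum>l<n. A i l * B l j) = detn n A * detn n B"
proof -
  have "sqmat n (\<lambda>i j. \<Sum>l<n. A i l * B l j) = sqmat n A * sqmat n B"
    by (rule eq_matI) (auto simp: scalar_prod_def atLeast0LessThan row_def col_def)
  then show ?thesis by (simp add: detn_eq_det det_mult[OF sqmat_carrier sqmat_carrier])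
qed

lemma detn_scalar: "detn n (\<lambda>r j. if r = j then x else 0) = x ^ n"
proof -
  have "sqmat n (\<lambda>r j. if r = j then x else 0) = x \<cdot>\<^sub>m 1\<^sub>m n" by (rule eq_matI) auto
  then show ?thesis by (simp add: detn_eq_det)
qed

lemma detn_eq_0_iff:
  "detn n T = 0 \<longleftrightarrow> (\<exists>v. (\<exists>j<n. v j \<noteq> 0) \<and> (\<forall>i<n. (\<Sum>j<n. T i j * v j) = 0))"
proof -
  have "detn n T = 0 \<longleftrightarrow> (\<exists>w. w \<in> carrier_vec n \<and> w \<noteq> 0\<^sub>v n \<and> sqmat n T *\<^sub>v w = 0\<^sub>v n)"
    unfolding detn_eq_det by (rule det_0_iff_vec_prod_zero_field[OF sqmat_carrier])
  also have "\<dots> \<longleftrightarrow> (\<exists>v. vec n v \<noteq> 0\<^sub>v n \<and> sqmat n T *\<^sub>v vec n v = 0\<^sub>v n)"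
    by (metis vec_carrier carrier_vecD eq_vecI index_vec)
  also have "\<dots> \<longleftrightarrow> (\<exists>v. (\<exists>j<n. v j \<noteq> 0) \<and> (\<forall>i<n. (\<Sum>j<n. T i j * v j) = 0))"
    by (simp add: vec_eq_iff sqmat_def scalar_prod_def atLeast0LessThan)
  finally show ?thesis .
qed

lemma detn_invertible:
  assumes "detn n T \<noteq> 0"
  shows "\<exists>T'. (\<forall>i<n. \<forall>j<n. (\<Sum>l<n. T i l * T' l j) = (if i = j then 1 else 0))
            \<and> (\<forall>i<n. \<forall>j<n. (\<Sum>l<n. T' i l * T l j) = (if i = j then 1 else 0))"
proof -
  let ?A = "sqmat n T"
  let ?B = "(1 / jdet ?A) \<cdot>\<^sub>m adj_mat ?A"
  define T' where "T' i j = ?B $$ (i, j)" for i j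
  have dA: "jdet ?A \<noteq> 0" using assms by (simp add: detn_eq_det)
  note adj = adj_mat[OF sqmat_carrier[of n T]]
  have Bd: "dim_row ?B = n" "dim_col ?B = n" using adj by auto
  have AB: "?A * ?B = 1\<^sub>m n" and BA: "?B * ?A = 1\<^sub>m n"
    using adj dA by (auto simp: mult_smult_distrib[OF sqmat_carrier adj(1)]
        mult_smult_assoc_mat[OF adj(1) sqmat_carrier])
  have "(\<Sum>l<n. T i l * T' l j) = (?A * ?B) $$ (i, j)"
    and "(\<Sum>l<n. T' i l * T l j) = (?B * ?A) $$ (i, j)" if "i < n" "j < n" for i j
    using that Bd by (simp_all add: T'_def scalar_prod_def atLeast0LessThan row_def col_def)
  then show ?thesis by (intro exI[of _ T']) (simp add: AB BA)
qed

lemma det_replace_row: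
  fixes A :: "'a::comm_ring_1 mat"
  assumes A: "A \<in> carrier_mat n n" and i: "i < n"
  shows "jdet (sqmat n (\<lambda>r j. if r = i then y j else A $$ (r, j))) = (\<Sum>j<n. y j * adj_mat A $$ (j, i))"
proof -
  let ?A' = "sqmat n (\<lambda>r j. if r = i then y j else A $$ (r, j))"
  have del: "mat_delete ?A' i j = mat_delete A i j" if "j < n" for j
    using A i that by (intro eq_matI) (auto simp: mat_delete_def)
  have "jdet ?A' = (\<Sum>j<n. ?A' $$ (i, j) * cofactor ?A' i j)"
    by (rule laplace_expansion_row[OF sqmat_carrier i])
  also have "\<dots> = (\<Sum>j<n. y j * cofactor A i j)"
    by (rule sum.cong) (use i del in \<open>auto simp: cofactor_def\<close>)
  also have "\<dots> = (\<Sum>j<n. y j * adj_mat A $$ (j, i))"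
    by (rule sum.cong) (use A i in \<open>auto simp: adj_mat_def\<close>)
  finally show ?thesis .
qed

lemma det_adj_mat:
  fixes A :: "'a::field mat"
  assumes A: "A \<in> carrier_mat n n" and "jdet A \<noteq> 0" and "n \<ge> 1"
  shows "jdet (adj_mat A) = jdet A ^ (n - 1)"
proof -
  have "jdet A * jdet (adj_mat A) = jdet (A * adj_mat A)"
    using det_mult[OF A adj_mat(1)[OF A]] by simp
  also have "\<dots> = jdet A ^ n" using adj_mat(2)[OF A] A by simp
  also have "\<dots> = jdet A * jdet A ^ (n - 1)" using \<open>n \<ge> 1\<close> by (simp add: power_eq_if)
  finally show ?thesis using \<open>jdet A \<noteq> 0\<close> by simp
qed

lemma detn_identical_rows:
  assumes "r1 < n" "r2 < n" "r1 \<noteq> r2" "\<And>j. A r1 j = A r2 j"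
  shows "detn n A = 0"
proof -
  have "row (sqmat n A) r1 = row (sqmat n A) r2"
    using assms by (intro eq_vecI) auto
  then show ?thesis unfolding detn_eq_det
    by (rule det_identical_rows[OF sqmat_carrier assms(3) assms(1) assms(2)])
qed

definition inj_tuples :: "nat \<Rightarrow> nat \<Rightarrow> (nat \<Rightarrow> nat) set" where
  "inj_tuples d n = {k \<in> PiE {..<d} (\<lambda>_. {..<n}). inj_on k {..<d}}"

lemma finite_inj_tuples: "finite (inj_tuples d n)"
  unfolding inj_tuples_def by (auto simp: finite_PiE)

lemma image_inj_tuple_in_psubsets: "k \<in> inj_tuples d (2*d) \<Longrightarrow> k ` {..<d} \<in> psubsets d"
  unfolding inj_tuples_def psubsets_def by (auto simp: card_image PiE_iff)

text \<open>The sign of the permutation that sorts the values of an injective tuple.\<close>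
definition sort_sign :: "nat \<Rightarrow> (nat \<Rightarrow> nat) \<Rightarrow> complex" where
  "sort_sign d k = detn d (\<lambda>r m. if sorted_list_of_set (k ` {..<d}) ! m = k r then 1 else 0)"

lemma detn_select_rows_inj:
  fixes b :: "nat \<Rightarrow> nat \<Rightarrow> complex"
  assumes "inj_on k {..<d}"
  shows "detn d (\<lambda>r j. b j (k r)) = sort_sign d k * plucker d b (k ` {..<d})"
proof -
  let ?L = "sorted_list_of_set (k ` {..<d})"
  have len: "length ?L = d" using assms by (simp add: card_image)
  have select: "(\<Sum>m<d. (if ?L ! m = k r then 1 else 0) * b j (?L ! m)) = b j (k r)"
    if r: "r < d" for r j
  proof -
    have "k r \<in> set ?L" using r by simp
    then obtain m0 where m0: "m0 < d" "?L ! m0 = k r" using len by (metis in_set_conv_nth)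
    have "?L ! m \<noteq> k r" if "m < d" "m \<noteq> m0" for m
      using that m0 len nth_eq_iff_index_eq[of ?L m m0] by simp
    then have "(\<Sum>m<d. (if ?L ! m = k r then 1 else 0) * b j (?L ! m))
        = (\<Sum>m\<in>{m0}. (if ?L ! m = k r then 1 else 0) * b j (?L ! m))"
      by (intro sum.mono_neutral_right) (use m0 in auto)
    then show ?thesis using m0 by simp
  qed
  have "detn d (\<lambda>r j. b j (k r))
      = detn d (\<lambda>r j. \<Sum>m<d. (if ?L ! m = k r then 1 else 0) * b j (?L ! m))"
    by (rule detn_cong) (simp add: select)
  also have "\<dots> = sort_sign d k * plucker d b (k ` {..<d})"
    unfolding sort_sign_def plucker_def by (rule detn_mult)
  finally show ?thesis .
qed

lemma detn_select_rows_not_inj: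
  assumes "\<not> inj_on k {..<d}"
  shows "detn d (\<lambda>r j. b j (k r)) = 0"
proof -
  obtain r1 r2 where "r1 < d" "r2 < d" "r1 \<noteq> r2" "k r1 = k r2"
    using assms unfolding inj_on_def by auto
  then show ?thesis by (intro detn_identical_rows[of r1 d r2]) auto
qed

lemma cauchy_binet:
  fixes Z :: "nat \<Rightarrow> nat \<Rightarrow> complex" and b :: "nat \<Rightarrow> nat \<Rightarrow> complex"
  shows "detn d (\<lambda>r j. \<Sum>l<n. Z r l * b j l)
    = (\<Sum>k\<in>inj_tuples d n. (\<Prod>r<d. Z r (k r)) * sort_sign d k * plucker d b (k ` {..<d}))"
proof -
  let ?K = "PiE {..<d} (\<lambda>_. {..<n})"
  let ?P = "{p. p permutes {0..<d}}"
  have "detn d (\<lambda>r j. \<Sum>l<n. Z r l * b j l)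
      = (\<Sum>p\<in>?P. of_int (sign p) * (\<Sum>k\<in>?K. (\<Prod>r<d. Z r (k r)) * (\<Prod>r<d. b (p r) (k r))))"
    by (simp add: detn_def prod_sum_PiE prod.distrib)
  also have "\<dots> = (\<Sum>k\<in>?K. \<Sum>p\<in>?P. (\<Prod>r<d. Z r (k r)) * (of_int (sign p) * (\<Prod>r<d. b (p r) (k r))))"
    by (subst sum.swap) (simp add: sum_distrib_left algebra_simps)
  also have "\<dots> = (\<Sum>k\<in>?K. (\<Prod>r<d. Z r (k r)) * detn d (\<lambda>r j. b j (k r)))"
    by (simp add: detn_def sum_distrib_left)
  also have "\<dots> = (\<Sum>k\<in>inj_tuples d n. (\<Prod>r<d. Z r (k r)) * detn d (\<lambda>r j. b j (k r)))"
    unfolding inj_tuples_def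
    by (rule sum.mono_neutral_right) (auto simp: detn_select_rows_not_inj finite_PiE)
  also have "\<dots> = (\<Sum>k\<in>inj_tuples d n. (\<Prod>r<d. Z r (k r)) * sort_sign d k * plucker d b (k ` {..<d}))"
    by (rule sum.cong) (auto simp: inj_tuples_def detn_select_rows_inj)
  finally show ?thesis .
qed

definition lin_span :: "nat \<Rightarrow> (nat \<Rightarrow> nat \<Rightarrow> complex) \<Rightarrow> (nat \<Rightarrow> complex) set" where
  "lin_span k e = {v. \<exists>c. v = lincomb k c e}"

definition lin_indep :: "nat \<Rightarrow> (nat \<Rightarrow> nat \<Rightarrow> complex) \<Rightarrow> bool" where
  "lin_indep k e \<longleftrightarrow> (\<forall>c. lincomb k c e = (\<lambda>_. 0) \<longrightarrow> (\<forall>j<k. c j = 0))"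

lemma is_basis_iff: "is_basis n k W b \<longleftrightarrow> (\<forall>j<k. b j \<in> cvec n) \<and> W = lin_span k b \<and> lin_indep k b"
  unfolding is_basis_def lin_span_def lin_indep_def by simp

lemma lincomb_cong: "(\<And>j. j < k \<Longrightarrow> c j = c' j) \<Longrightarrow> lincomb k c e = lincomb k c' e"
  unfolding lincomb_def by auto

lemma lincomb_cong_vectors: "(\<And>j. j < k \<Longrightarrow> e j = e' j) \<Longrightarrow> lincomb k c e = lincomb k c e'"
  unfolding lincomb_def by auto

lemma lin_span_cong: "(\<And>j. j < k \<Longrightarrow> e j = e' j) \<Longrightarrow> lin_span k e = lin_span k e'"
  unfolding lin_span_def using lincomb_cong_vectors[of k e e'] by auto

lemma lincomb_in_cvec: "(\<And>j. j < k \<Longrightarrow> e j \<in> cvec n) \<Longrightarrow> lincomb k c e \<in> cvec n"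
  unfolding lincomb_def cvec_def by auto

lemma lincomb_in_lin_span: "lincomb k c e \<in> lin_span k e"
  unfolding lin_span_def by auto

lemma lincomb_add_vectors: "lincomb k x (\<lambda>j i. e j i + f j i) = (\<lambda>i. lincomb k x e i + lincomb k x f i)"
  by (rule ext) (simp add: lincomb_def distrib_left sum.distrib)

lemma lincomb_scale_vectors: "lincomb k x (\<lambda>j i. z * f j i) = (\<lambda>i. z * lincomb k x f i)"
  by (rule ext) (simp add: lincomb_def sum_distrib_left mult_ac)

lemma lincomb_lincomb:
  "lincomb k c (\<lambda>j. lincomb m (\<lambda>r. T r j) e) = lincomb m (\<lambda>r. \<Sum>j<k. T r j * c j) e"
  unfolding lincomb_def
proof (rule ext)
  fix i
  have "(\<Sum>j<k. c j * (\<Sum>r<m. T r j * e r i)) = (\<Sum>j<k. \<Sum>r<m. c j * (T r j * e r i))"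
    by (simp add: sum_distrib_left)
  also have "\<dots> = (\<Sum>r<m. \<Sum>j<k. c j * (T r j * e r i))" by (rule sum.swap)
  also have "\<dots> = (\<Sum>r<m. (\<Sum>j<k. T r j * c j) * e r i)"
    by (intro sum.cong refl) (simp add: sum_distrib_right sum_distrib_left mult_ac)
  finally show "(\<Sum>j<k. c j * (\<Sum>r<m. T r j * e r i)) = (\<Sum>r<m. (\<Sum>j<k. T r j * c j) * e r i)" .
qed

lemma sum_delta_mult:
  fixes f :: "nat \<Rightarrow> 'a::comm_semiring_1"
  assumes "j < k"
  shows "(\<Sum>r<k. (if r = j then 1 else 0) * f r) = f j" "(\<Sum>r<k. (if j = r then 1 else 0) * f r) = f j"
  using assms by (simp_all add: if_distrib[of "\<lambda>x. x * _"] cong: if_cong)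

lemma lincomb_scalar:
  assumes "j < k"
  shows "lincomb k (\<lambda>r. if r = j then x else 0) e = (\<lambda>i. x * e j i)"
  unfolding lincomb_def
  using assms by (simp add: if_distrib[of "\<lambda>x. x * _"] cong: if_cong)

lemma vector_in_lin_span:
  assumes "j < k"
  shows "e j \<in> lin_span k e"
proof -
  have "lincomb k (\<lambda>r. if r = j then 1 else 0) e = e j"
    using lincomb_scalar[OF assms, of 1 e] by simp
  then show ?thesis by (metis lincomb_in_lin_span)
qed

lemma lincomb_of_transformed:
  assumes "\<And>j. j < k \<Longrightarrow> b j = lincomb m (\<lambda>r. T r j) e"
  shows "lincomb k x b = lincomb m (\<lambda>r. \<Sum>j<k. T r j * x j) e"
proof -
  have "lincomb k x b = lincomb k x (\<lambda>j. lincomb m (\<lambda>r. T r j) e)"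
    by (rule lincomb_cong_vectors) (simp add: assms)
  then show ?thesis by (simp add: lincomb_lincomb)
qed

lemma lin_span_transform:
  assumes b: "\<And>j. j < d \<Longrightarrow> b j = lincomb d (\<lambda>r. T r j) e" and "detn d T \<noteq> 0"
  shows "lin_span d b = lin_span d e"
proof
  obtain T' where T1: "\<forall>i<d. \<forall>j<d. (\<Sum>l<d. T i l * T' l j) = (if i = j then 1 else 0)"
    using detn_invertible[OF \<open>detn d T \<noteq> 0\<close>] by blast
  have e: "e i = lincomb d (\<lambda>j. T' j i) b" if "i < d" for i
  proof -
    have "lincomb d (\<lambda>j. T' j i) b = lincomb d (\<lambda>r. \<Sum>j<d. T r j * T' j i) e"
      by (rule lincomb_of_transformed[OF b])
    also have "\<dots> = lincomb d (\<lambda>r. if r = i then 1 else 0) e"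
      by (rule lincomb_cong) (use T1 that in auto)
    finally show ?thesis using lincomb_scalar[OF that, of 1 e] by simp
  qed
  have "lincomb d x e \<in> lin_span d b" for x
    by (simp only: lincomb_of_transformed[OF e] lincomb_in_lin_span)
  then show "lin_span d e \<subseteq> lin_span d b" by (auto simp: lin_span_def)
  have "lincomb d x b \<in> lin_span d e" for x
    by (simp only: lincomb_of_transformed[OF b] lincomb_in_lin_span)
  then show "lin_span d b \<subseteq> lin_span d e" by (auto simp: lin_span_def)
qed

lemma lin_indep_transform:
  assumes b: "\<And>j. j < d \<Longrightarrow> b j = lincomb d (\<lambda>r. T r j) e"
    and "detn d T \<noteq> 0" and "lin_indep d e"
  shows "lin_indep d b"
  unfolding lin_indep_def
proof (intro allI impI)
  fix x j assume x: "lincomb d x b = (\<lambda>_. 0)" and j: "j < d"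
  obtain T' where T2: "\<forall>i<d. \<forall>j<d. (\<Sum>l<d. T' i l * T l j) = (if i = j then 1 else 0)"
    using detn_invertible[OF \<open>detn d T \<noteq> 0\<close>] by blast
  have "lincomb d (\<lambda>r. \<Sum>i<d. T r i * x i) e = (\<lambda>_. 0)"
    using x lincomb_of_transformed[OF b, where x = x] by simp
  then have Tx: "\<forall>r<d. (\<Sum>i<d. T r i * x i) = 0"
    using \<open>lin_indep d e\<close> unfolding lin_indep_def by blast
  have "x j = (\<Sum>i<d. (\<Sum>r<d. T' j r * T r i) * x i)"
    using j T2 by (simp add: sum_delta_mult)
  also have "\<dots> = (\<Sum>i<d. \<Sum>r<d. T' j r * (T r i * x i))"
    by (simp add: sum_distrib_right mult.assoc)
  also have "\<dots> = (\<Sum>r<d. T' j r * (\<Sum>i<d. T r i * x i))"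
    by (subst sum.swap) (simp add: sum_distrib_left)
  also have "\<dots> = 0" using Tx by simp
  finally show "x j = 0" .
qed

lemma detn_ne_0_if_lin_indep:
  assumes b: "\<And>j. j < d \<Longrightarrow> b j = lincomb d (\<lambda>r. T r j) e" and "lin_indep d b"
  shows "detn d T \<noteq> 0"
proof
  assume "detn d T = 0"
  then obtain v where v: "\<exists>j<d. v j \<noteq> 0" "\<forall>i<d. (\<Sum>j<d. T i j * v j) = 0"
    using detn_eq_0_iff by blast
  have "lincomb d v b = lincomb d (\<lambda>r. \<Sum>j<d. T r j * v j) e"
    by (rule lincomb_of_transformed[OF b])
  also have "\<dots> = lincomb d (\<lambda>_. 0) e" by (rule lincomb_cong) (use v(2) in auto)
  finally have "lincomb d v b = (\<lambda>_. 0)" by (simp add: lincomb_def)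
  then show False using \<open>lin_indep d b\<close> v(1) unfolding lin_indep_def by blast
qed

lemma lin_span_choice:
  assumes "\<And>j. j < d \<Longrightarrow> b j \<in> lin_span d e"
  shows "\<exists>L. \<forall>j<d. b j = lincomb d (\<lambda>r. L r j) e"
proof -
  have "\<forall>j. \<exists>x. j < d \<longrightarrow> b j = lincomb d x e" using assms unfolding lin_span_def by blast
  then obtain x where "\<forall>j. j < d \<longrightarrow> b j = lincomb d (x j) e" by metis
  then show ?thesis by (intro exI[of _ "\<lambda>r j. x j r"]) auto
qed

lemma lin_indep_shear:
  assumes "lin_indep d a" and "lin_span d a \<inter> lin_span d c = {\<lambda>_. 0}"
  shows "lin_indep d (\<lambda>j i. a j i + z * c j i)"
  unfolding lin_indep_def
proof (intro allI impI)
  fix x j assume x: "lincomb d x (\<lambda>j i. a j i + z * c j i) = (\<lambda>_. 0)" and j: "j < d"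
  have "lincomb d x a = lincomb d (\<lambda>j. - z * x j) c"
  proof (rule ext)
    fix i
    have "lincomb d x a i + z * lincomb d x c i = 0"
      using fun_cong[OF x, of i] by (simp add: lincomb_add_vectors lincomb_scale_vectors)
    then show "lincomb d x a i = lincomb d (\<lambda>j. - z * x j) c i"
      by (simp add: lincomb_def sum_distrib_left mult_ac sum_negf eq_neg_iff_add_eq_0)
  qed
  then have "lincomb d x a \<in> lin_span d c" by (simp only: lincomb_in_lin_span)
  then have "lincomb d x a \<in> lin_span d a \<inter> lin_span d c"
    using lincomb_in_lin_span[of d x a] by blast
  then have "lincomb d x a = (\<lambda>_. 0)" using assms(2) by auto
  then show "x j = 0" using assms(1) j unfolding lin_indep_def by blast
qed

lemma sum_lessThan_add: "(\<Sum>j<(m::nat) + n. f j) = (\<Sum>j<m. f j) + (\<Sum>j<n. f (m + j))"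
  by (induction n) (simp_all add: add.assoc)

definition join_vectors :: "nat \<Rightarrow> (nat \<Rightarrow> nat \<Rightarrow> complex) \<Rightarrow> (nat \<Rightarrow> nat \<Rightarrow> complex) \<Rightarrow> nat \<Rightarrow> nat \<Rightarrow> complex" where
  "join_vectors d a c j = (if j < d then a j else c (j - d))"

lemma sum_join_vectors:
  "(\<Sum>j<2*d. v j * join_vectors d a c j i) = lincomb d v a i + lincomb d (\<lambda>j. v (d + j)) c i"
  using sum_lessThan_add[of "\<lambda>j. v j * join_vectors d a c j i" d d]
  by (simp add: mult_2 lincomb_def join_vectors_def)

lemma detn_join_vectors_ne_0:
  assumes "\<And>j. j < d \<Longrightarrow> a j \<in> cvec (2*d)" "\<And>j. j < d \<Longrightarrow> c j \<in> cvec (2*d)"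
    and "lin_indep d a" "lin_indep d c" "lin_span d a \<inter> lin_span d c = {\<lambda>_. 0}"
  shows "detn (2*d) (\<lambda>i j. join_vectors d a c j i) \<noteq> 0"
proof
  assume "detn (2*d) (\<lambda>i j. join_vectors d a c j i) = 0"
  then obtain v where v: "\<exists>j<2*d. v j \<noteq> 0"
    and kernel: "\<forall>i<2*d. (\<Sum>j<2*d. join_vectors d a c j i * v j) = 0"
    unfolding detn_eq_0_iff by blast
  have "join_vectors d a c j \<in> cvec (2*d)" if "j < 2*d" for j
    using that assms(1,2) by (auto simp: join_vectors_def)
  then have "lincomb d v a i + lincomb d (\<lambda>j. v (d + j)) c i = 0" for i
    using kernel by (cases "i < 2*d") (auto simp: sum_join_vectors[symmetric] mult.commute cvec_def)
  then have e: "lincomb d v a = lincomb d (\<lambda>j. - v (d + j)) c"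
    by (auto simp: lincomb_def sum_negf eq_neg_iff_add_eq_0)
  then have "lincomb d v a \<in> lin_span d c" by (simp only: lincomb_in_lin_span)
  then have "lincomb d v a \<in> lin_span d a \<inter> lin_span d c"
    using lincomb_in_lin_span[of d v a] by blast
  then have "lincomb d v a = (\<lambda>_. 0)" using assms(5) by auto
  moreover from this have "lincomb d (\<lambda>j. - v (d + j)) c = (\<lambda>_. 0)" using e by simp
  ultimately have "\<forall>j<d. v j = 0" "\<forall>j<d. - v (d + j) = 0"
    using assms(3,4) unfolding lin_indep_def by blast+
  then have "v j = 0" if "j < 2*d" for j
  proof (cases "j < d")
    case False
    then have "j - d < d" "d + (j - d) = j" using that by auto
    with \<open>\<forall>j<d. - v (d + j) = 0\<close> show ?thesis by force
  qed (use \<open>\<forall>j<d. v j = 0\<close> in auto)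
  with v show False by blast
qed

lemma detn_coords_ne_0:
  assumes "\<And>j. j < d \<Longrightarrow> b j \<in> lin_span d e" "lin_indep d b"
    and coord: "\<And>L r. r < d \<Longrightarrow> \<kappa> (lincomb d L e) r = L r"
  shows "detn d (\<lambda>r j. \<kappa> (b j) r) \<noteq> 0"
proof -
  obtain L where L: "\<forall>j<d. b j = lincomb d (\<lambda>r. L r j) e"
    using lin_span_choice assms(1) by blast
  have "b j = lincomb d (\<lambda>r. \<kappa> (b j) r) e" if "j < d" for j
  proof -
    have "b j = lincomb d (\<lambda>r. L r j) e" using L that by blast
    also have "\<dots> = lincomb d (\<lambda>r. \<kappa> (b j) r) e"
      by (rule lincomb_cong) (use L that coord in simp)
    finally show ?thesis .
  qed
  then show ?thesis by (rule detn_ne_0_if_lin_indep[OF _ assms(2)])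
qed

section \<open>Coordinates along a splitting\<close>

text \<open>The columns \<open>a\<^sub>0, \<dots>, a\<^sub>d\<^sub>-\<^sub>1, c\<^sub>0, \<dots>, c\<^sub>d\<^sub>-\<^sub>1\<close> form a basis of \<open>\<complex>\<^sup>2\<^sup>d\<close> and
  \<open>R\<close> is the inverse matrix: its rows \<open>0..<d\<close> read off the coordinates along the \<open>a\<^sub>j\<close>,
  its rows \<open>d..<2d\<close> those along the \<open>c\<^sub>j\<close>.\<close>
locale frame =
  fixes d :: nat and a c R :: "nat \<Rightarrow> nat \<Rightarrow> complex"
  assumes a_cvec: "j < d \<Longrightarrow> a j \<in> cvec (2*d)"
    and c_cvec: "j < d \<Longrightarrow> c j \<in> cvec (2*d)"
    and R_a: "r < 2*d \<Longrightarrow> j < d \<Longrightarrow> (\<Sum>l<2*d. R r l * a j l) = (if r = j then 1 else 0)"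
    and R_c: "r < 2*d \<Longrightarrow> j < d \<Longrightarrow> (\<Sum>l<2*d. R r l * c j l) = (if r = d + j then 1 else 0)"
    and decomp: "x \<in> cvec (2*d) \<Longrightarrow> x = (\<lambda>i. lincomb d (\<lambda>r. \<Sum>l<2*d. R r l * x l) a i
                                     + lincomb d (\<lambda>r. \<Sum>l<2*d. R (d + r) l * x l) c i)"
begin

definition xcoord :: "(nat \<Rightarrow> complex) \<Rightarrow> nat \<Rightarrow> complex" where
  "xcoord v r = (\<Sum>l<2*d. R r l * v l)"

definition ycoord :: "(nat \<Rightarrow> complex) \<Rightarrow> nat \<Rightarrow> complex" where
  "ycoord v r = (\<Sum>l<2*d. R (d + r) l * v l)"

lemma coords_decomp: "v \<in> cvec (2*d) \<Longrightarrow> v = (\<lambda>i. lincomb d (xcoord v) a i + lincomb d (ycoord v) c i)"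
  unfolding xcoord_def ycoord_def by (rule decomp)

lemma R_lincomb:
  assumes r: "r < 2*d"
  shows "(\<Sum>l<2*d. R r l * (lincomb d L a l + lincomb d M c l)) = (if r < d then L r else M (r - d))"
proof -
  have "(\<Sum>l<2*d. R r l * (lincomb d L a l + lincomb d M c l))
      = (\<Sum>l<2*d. \<Sum>j<d. L j * (R r l * a j l)) + (\<Sum>l<2*d. \<Sum>j<d. M j * (R r l * c j l))"
    by (simp add: lincomb_def distrib_left sum.distrib sum_distrib_left mult_ac)
  also have "\<dots> = (\<Sum>j<d. \<Sum>l<2*d. L j * (R r l * a j l)) + (\<Sum>j<d. \<Sum>l<2*d. M j * (R r l * c j l))"
    by (subst (1 2) sum.swap) (rule refl)
  also have "\<dots> = (\<Sum>j<d. L j * (if r = j then 1 else 0)) + (\<Sum>j<d. M j * (if r = d + j then 1 else 0))"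
    using r by (simp add: sum_distrib_left[symmetric] R_a R_c)
  also have "\<dots> = (if r < d then L r else M (r - d))"
  proof (cases "r < d")
    case True
    then show ?thesis using sum_delta_mult(2)[OF True, of L] by (simp add: mult.commute)
  next
    case False
    then have "r - d < d" "\<And>j. (r = d + j) = (r - d = j)" using r by auto
    then show ?thesis using False sum_delta_mult(2)[of "r - d" d M] by (simp add: mult.commute)
  qed
  finally show ?thesis .
qed

lemma coords_lincomb:
  assumes "r < d"
  shows "xcoord (\<lambda>i. lincomb d L a i + lincomb d M c i) r = L r"
    and "ycoord (\<lambda>i. lincomb d L a i + lincomb d M c i) r = M r"
  using R_lincomb[of r L M] R_lincomb[of "d + r" L M] assms by (simp_all add: xcoord_def ycoord_def)

lemma coords_lincomb_a:
  assumes "r < d"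
  shows "xcoord (lincomb d L a) r = L r" "ycoord (lincomb d L a) r = 0"
proof -
  have "lincomb d L a = (\<lambda>i. lincomb d L a i + lincomb d (\<lambda>_. 0) c i)" by (simp add: lincomb_def)
  then show "xcoord (lincomb d L a) r = L r" "ycoord (lincomb d L a) r = 0"
    using coords_lincomb[OF assms, of L "\<lambda>_. 0"] by simp_all
qed

lemma coords_lincomb_c:
  assumes "r < d"
  shows "xcoord (lincomb d M c) r = 0" "ycoord (lincomb d M c) r = M r"
proof -
  have "lincomb d M c = (\<lambda>i. lincomb d (\<lambda>_. 0) a i + lincomb d M c i)" by (simp add: lincomb_def)
  then show "xcoord (lincomb d M c) r = 0" "ycoord (lincomb d M c) r = M r"
    using coords_lincomb[OF assms, of "\<lambda>_. 0" M] by simp_all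
qed

lemma coords_lincomb_a_plus_c:
  assumes "r < d"
  shows "xcoord (lincomb d L (\<lambda>j i. a j i + c j i)) r = L r"
    "ycoord (lincomb d L (\<lambda>j i. a j i + c j i)) r = L r"
  using coords_lincomb[OF assms, of L L] by (simp_all add: lincomb_add_vectors)

definition xmat :: "(nat \<Rightarrow> nat \<Rightarrow> complex) \<Rightarrow> complex mat" where
  "xmat b = sqmat d (\<lambda>r j. xcoord (b j) r)"

definition ymat :: "(nat \<Rightarrow> nat \<Rightarrow> complex) \<Rightarrow> complex mat" where
  "ymat b = sqmat d (\<lambda>r j. ycoord (b j) r)"

lemma xmat_carrier [simp]: "xmat b \<in> carrier_mat d d"
  and ymat_carrier [simp]: "ymat b \<in> carrier_mat d d"
  and xymat_dims [simp]: "dim_row (xmat b) = d" "dim_col (xmat b) = d" "dim_row (ymat b) = d" "dim_col (ymat b) = d"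
  by (simp_all add: xmat_def ymat_def)

lemma detn_xrows: "detn d (\<lambda>r j. \<Sum>l<2*d. R r l * b j l) = jdet (xmat b)"
  unfolding detn_eq_det xmat_def xcoord_def ..

lemma detn_yrows: "detn d (\<lambda>r j. \<Sum>l<2*d. R (d + r) l * b j l) = jdet (ymat b)"
  unfolding detn_eq_det ymat_def ycoord_def ..

definition xrows_with_yrow :: "nat \<Rightarrow> nat \<Rightarrow> nat \<Rightarrow> nat \<Rightarrow> complex" where
  "xrows_with_yrow i k r l = (if r = i then R (d + k) l else R r l)"

definition yrows_with_xrow :: "nat \<Rightarrow> nat \<Rightarrow> nat \<Rightarrow> nat \<Rightarrow> complex" where
  "yrows_with_xrow i k r l = (if r = i then R k l else R (d + r) l)"

lemma detn_xrows_with_yrow: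
  assumes "i < d" "k < d"
  shows "detn d (\<lambda>r j. \<Sum>l<2*d. xrows_with_yrow i k r l * b j l) = (ymat b * adj_mat (xmat b)) $$ (k, i)"
proof -
  have "detn d (\<lambda>r j. \<Sum>l<2*d. xrows_with_yrow i k r l * b j l)
      = jdet (sqmat d (\<lambda>r j. if r = i then ycoord (b j) k else xmat b $$ (r, j)))"
    unfolding detn_eq_det
    by (intro arg_cong[of _ _ jdet] eq_matI) (auto simp: xrows_with_yrow_def xmat_def xcoord_def ycoord_def)
  also have "\<dots> = (\<Sum>j<d. ycoord (b j) k * adj_mat (xmat b) $$ (j, i))"
    by (rule det_replace_row[OF xmat_carrier assms(1)])
  also have "\<dots> = (ymat b * adj_mat (xmat b)) $$ (k, i)"
    using assms adj_mat(1)[OF xmat_carrier[of b]]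
    by (simp add: ymat_def scalar_prod_def atLeast0LessThan)
  finally show ?thesis .
qed

lemma detn_yrows_with_xrow:
  assumes "i < d" "k < d"
  shows "detn d (\<lambda>r j. \<Sum>l<2*d. yrows_with_xrow i k r l * b j l) = (xmat b * adj_mat (ymat b)) $$ (k, i)"
proof -
  have "detn d (\<lambda>r j. \<Sum>l<2*d. yrows_with_xrow i k r l * b j l)
      = jdet (sqmat d (\<lambda>r j. if r = i then xcoord (b j) k else ymat b $$ (r, j)))"
    unfolding detn_eq_det
    by (intro arg_cong[of _ _ jdet] eq_matI) (auto simp: yrows_with_xrow_def ymat_def xcoord_def ycoord_def)
  also have "\<dots> = (\<Sum>j<d. xcoord (b j) k * adj_mat (ymat b) $$ (j, i))"
    by (rule det_replace_row[OF ymat_carrier assms(1)])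
  also have "\<dots> = (xmat b * adj_mat (ymat b)) $$ (k, i)"
    using assms adj_mat(1)[OF ymat_carrier[of b]]
    by (simp add: xmat_def scalar_prod_def atLeast0LessThan)
  finally show ?thesis .
qed

lemma in_lin_span_a_coords: "v \<in> lin_span d a \<Longrightarrow> r < d \<Longrightarrow> ycoord v r = 0"
  unfolding lin_span_def using coords_lincomb_a(2) by auto

lemma in_lin_span_c_coords: "v \<in> lin_span d c \<Longrightarrow> r < d \<Longrightarrow> xcoord v r = 0"
  unfolding lin_span_def using coords_lincomb_c(1) by auto

lemma in_lin_span_a_plus_c_coords:
  "v \<in> lin_span d (\<lambda>j i. a j i + c j i) \<Longrightarrow> r < d \<Longrightarrow> xcoord v r = ycoord v r"
  unfolding lin_span_def using coords_lincomb_a_plus_c by auto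

end

lemma frame_exists:
  assumes a: "\<And>j. j < d \<Longrightarrow> a j \<in> cvec (2*d)" and c: "\<And>j. j < d \<Longrightarrow> c j \<in> cvec (2*d)"
    and "lin_indep d a" "lin_indep d c" "lin_span d a \<inter> lin_span d c = {\<lambda>_. 0}"
  shows "\<exists>R. frame d a c R"
proof -
  let ?q = "join_vectors d a c"
  obtain T where T1: "\<forall>i<2*d. \<forall>j<2*d. (\<Sum>l<2*d. ?q l i * T l j) = (if i = j then 1 else 0)"
    and T2: "\<forall>i<2*d. \<forall>j<2*d. (\<Sum>l<2*d. T i l * ?q j l) = (if i = j then 1 else 0)"
    using detn_invertible[OF detn_join_vectors_ne_0[OF assms]] by blast
  have q: "?q j \<in> cvec (2*d)" if "j < 2*d" for j using that a c by (auto simp: join_vectors_def)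
  have "frame d a c T"
  proof
    show "a j \<in> cvec (2*d)" "c j \<in> cvec (2*d)" if "j < d" for j using a c that by auto
    show "(\<Sum>l<2*d. T r l * a j l) = (if r = j then 1 else 0)" if "r < 2*d" "j < d" for r j
      using T2[rule_format, of r j] that by (simp add: join_vectors_def)
    show "(\<Sum>l<2*d. T r l * c j l) = (if r = d + j then 1 else 0)" if "r < 2*d" "j < d" for r j
      using T2[rule_format, of r "d + j"] that by (simp add: join_vectors_def)
    show "x = (\<lambda>i. lincomb d (\<lambda>r. \<Sum>l<2*d. T r l * x l) a i
                + lincomb d (\<lambda>r. \<Sum>l<2*d. T (d + r) l * x l) c i)" if x: "x \<in> cvec (2*d)" for x
    proof (rule ext)
      fix i
      have "(\<Sum>j<2*d. (\<Sum>l<2*d. T j l * x l) * ?q j i) = x i"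
      proof (cases "i < 2*d")
        case True
        have "(\<Sum>j<2*d. (\<Sum>l<2*d. T j l * x l) * ?q j i) = (\<Sum>j<2*d. \<Sum>l<2*d. ?q j i * T j l * x l)"
          by (simp add: sum_distrib_left sum_distrib_right mult_ac)
        also have "\<dots> = (\<Sum>l<2*d. (\<Sum>j<2*d. ?q j i * T j l) * x l)"
          by (subst sum.swap) (simp add: sum_distrib_right)
        also have "\<dots> = (\<Sum>l<2*d. (if i = l then 1 else 0) * x l)"
          by (rule sum.cong) (use T1 True in auto)
        also have "\<dots> = x i" using True by (rule sum_delta_mult(2))
        finally show ?thesis .
      next
        case False
        then show ?thesis using x q by (simp add: cvec_def)
      qed
      then show "x i = lincomb d (\<lambda>r. \<Sum>l<2*d. T r l * x l) a i
                + lincomb d (\<lambda>r. \<Sum>l<2*d. T (d + r) l * x l) c i"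
        by (simp add: sum_join_vectors)
    qed
  qed
  then show ?thesis by blast
qed

interpretation poly_eval_hom: comm_ring_hom "\<lambda>p::complex poly. poly p z" by unfold_locales auto

abbreviation eval_mat :: "complex \<Rightarrow> complex poly mat \<Rightarrow> complex mat" where
  "eval_mat z A \<equiv> map_mat (\<lambda>p. poly p z) A"

lemma eval_mat_det: "jdet (eval_mat z A) = poly (jdet A) z"
  by (rule poly_eval_hom.hom_det)

lemma eval_mat_mult: "A \<in> carrier_mat n n \<Longrightarrow> B \<in> carrier_mat n n \<Longrightarrow> eval_mat z (A * B) = eval_mat z A * eval_mat z B"
  by (rule poly_eval_hom.mat_hom_mult)

lemma eval_mat_smult: "eval_mat z (a \<cdot>\<^sub>m A) = poly a z \<cdot>\<^sub>m eval_mat z A"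
  by (rule eq_matI) auto

lemma eval_mat_one: "eval_mat z (1\<^sub>m n) = 1\<^sub>m n"
  by (rule eq_matI) auto

lemma dim_adj_mat [simp]: "dim_row (adj_mat A) = dim_row A" "dim_col (adj_mat A) = dim_col A"
  by (simp_all add: adj_mat_def)

lemma smult_smult_mat: "a \<cdot>\<^sub>m (b \<cdot>\<^sub>m A) = (a * b) \<cdot>\<^sub>m (A :: 'a::comm_ring_1 mat)"
  by (rule eq_matI) auto

lemma degree_le_diff_1:
  fixes p :: "complex poly"
  assumes "degree p \<le> d" "coeff p d = 0" "d \<ge> 1"
  shows "degree p \<le> d - 1"
proof (cases "p = 0")
  case True then show ?thesis by simp
next
  case False
  then have "coeff p (degree p) \<noteq> 0" by simp
  then have "degree p \<noteq> d" using assms(2) by auto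
  then show ?thesis using assms(1) by simp
qed

lemma poly_degree_0_const:
  fixes p :: "complex poly"
  assumes "degree p = 0"
  shows "poly p z = poly p w"
  using assms by (simp add: poly_altdef)

lemma poly_eq_x_mult_div_x:
  fixes p :: "complex poly"
  assumes "poly p 0 = 0"
  shows "p = [:0,1:] * (p div [:0,1:])"
proof -
  have "[:0,1:] dvd p" using assms dvd_iff_poly_eq_0[of 0 p] by simp
  then show ?thesis by (rule dvd_mult_div_cancel[symmetric])
qed

lemma poly_eq_on_infinite:
  fixes p q :: "complex poly"
  assumes "infinite S" "\<And>z. z \<in> S \<Longrightarrow> poly p z = poly q z"
  shows "p = q"
proof (rule ccontr)
  assume "p \<noteq> q"
  then have "p - q \<noteq> 0" by simp
  then have "finite {z. poly (p - q) z = 0}" by (rule poly_roots_finite)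
  moreover have "S \<subseteq> {z. poly (p - q) z = 0}" using assms(2) by auto
  ultimately show False using assms(1) finite_subset by blast
qed

lemma infinite_nonroots:
  fixes p :: "complex poly"
  assumes "p \<noteq> 0"
  shows "infinite {z. poly p z \<noteq> 0}"
proof
  assume "finite {z. poly p z \<noteq> 0}"
  moreover have "finite {z. poly p z = 0}" using poly_roots_finite[OF assms] .
  ultimately have "finite ({z. poly p z \<noteq> 0} \<union> {z. poly p z = 0})" by simp
  moreover have "{z. poly p z \<noteq> 0} \<union> {z. poly p z = 0} = (UNIV :: complex set)" by auto
  ultimately show False using infinite_UNIV_char_0[where 'a=complex] by simp
qed

lemma one_smult_mat[simp]: "1 \<cdot>\<^sub>m A = (A :: 'a::comm_ring_1 mat)"
  by (rule eq_matI) auto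

lemma smult_mat_cancel:
  fixes A B :: "'a::field mat"
  assumes "a \<cdot>\<^sub>m A = a \<cdot>\<^sub>m B" "a \<noteq> 0"
  shows "A = B"
proof -
  have "(1 / a) \<cdot>\<^sub>m (a \<cdot>\<^sub>m A) = (1 / a) \<cdot>\<^sub>m (a \<cdot>\<^sub>m B)" using assms(1) by simp
  then show ?thesis using assms(2) by (simp add: smult_smult_mat)
qed

lemma mat_mult_right_cancel:
  fixes A B C :: "'a::field mat"
  assumes A: "A \<in> carrier_mat n n" and B: "B \<in> carrier_mat n n" and C: "C \<in> carrier_mat n n"
    and "jdet C \<noteq> 0" and "A * C = B * C"
  shows "A = B"
proof (rule smult_mat_cancel[OF _ \<open>jdet C \<noteq> 0\<close>])
  have adj: "M * C * adj_mat C = jdet C \<cdot>\<^sub>m M" if "M \<in> carrier_mat n n" for M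
    by (simp add: assoc_mult_mat[OF that C adj_mat(1)[OF C]] adj_mat(2)[OF C]
        mult_smult_distrib[OF that one_carrier_mat] right_mult_one_mat[OF that])
  show "jdet C \<cdot>\<^sub>m A = jdet C \<cdot>\<^sub>m B"
    using adj[OF A] adj[OF B] \<open>A * C = B * C\<close> by simp
qed

section \<open>Uniqueness of the curve\<close>

locale normalized_curve = frame +
  fixes P :: "nat set \<Rightarrow> complex poly" and B :: "complex \<Rightarrow> complex \<Rightarrow> nat \<Rightarrow> nat \<Rightarrow> complex"
  assumes d_pos: "1 \<le> d"
    and P_degree: "\<And>I. degree (P I) \<le> d"
    and B_cvec: "\<And>s t j. (s,t) \<noteq> (0,0) \<Longrightarrow> j < d \<Longrightarrow> B s t j \<in> cvec (2*d)"
    and B_lin_indep: "\<And>s t. (s,t) \<noteq> (0,0) \<Longrightarrow> lin_indep d (B s t)"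
    and B_plucker: "\<And>s t I. (s,t) \<noteq> (0,0) \<Longrightarrow> I \<in> psubsets d \<Longrightarrow> plucker d (B s t) I = hom_eval d (P I) s t"
    and B_at_0: "\<And>j. j < d \<Longrightarrow> B 1 0 j \<in> lin_span d a"
    and B_at_infinity: "\<And>j. j < d \<Longrightarrow> B 0 1 j \<in> lin_span d c"
    and B_at_1: "\<And>j. j < d \<Longrightarrow> B 1 1 j \<in> lin_span d (\<lambda>j i. a j i + c j i)"
begin

definition minor_poly :: "(nat \<Rightarrow> nat \<Rightarrow> complex) \<Rightarrow> complex poly" where
  "minor_poly Z = (\<Sum>k\<in>inj_tuples d (2*d). Polynomial.smult ((\<Prod>r<d. Z r (k r)) * sort_sign d k) (P (k ` {..<d})))"

lemma minor_poly_degree: "degree (minor_poly Z) \<le> d"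
  unfolding minor_poly_def
  by (rule degree_sum_le[OF finite_inj_tuples]) (rule order_trans[OF degree_smult_le P_degree])

lemma hom_eval_minor_poly:
  assumes "(s,t) \<noteq> (0,0)"
  shows "hom_eval d (minor_poly Z) s t = detn d (\<lambda>r j. \<Sum>l<2*d. Z r l * B s t j l)"
  unfolding minor_poly_def hom_eval_sum hom_eval_smult cauchy_binet
  by (rule sum.cong) (use assms B_plucker image_inj_tuple_in_psubsets in auto)

lemma poly_minor_poly: "poly (minor_poly Z) z = detn d (\<lambda>r j. \<Sum>l<2*d. Z r l * B 1 z j l)"
  using hom_eval_minor_poly[of 1 z Z] hom_eval_1[OF minor_poly_degree] by simp

lemma coeff_minor_poly: "coeff (minor_poly Z) d = detn d (\<lambda>r j. \<Sum>l<2*d. Z r l * B 0 1 j l)"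
  using hom_eval_minor_poly[of 0 1 Z] hom_eval_0 by simp

abbreviation X :: "complex \<Rightarrow> complex mat" where "X z \<equiv> xmat (B 1 z)"
abbreviation Y :: "complex \<Rightarrow> complex mat" where "Y z \<equiv> ymat (B 1 z)"

definition detX_poly where "detX_poly = minor_poly (\<lambda>r l. R r l)"
definition detY_poly where "detY_poly = minor_poly (\<lambda>r l. R (d + r) l)"
definition YadjX_poly where "YadjX_poly = Matrix.mat d d (\<lambda>(k,i). minor_poly (xrows_with_yrow i k))"
definition XadjY_poly where "XadjY_poly = Matrix.mat d d (\<lambda>(k,i). minor_poly (yrows_with_xrow i k))"

lemma YadjX_poly_carrier[simp]: "YadjX_poly \<in> carrier_mat d d"
  and XadjY_poly_carrier[simp]: "XadjY_poly \<in> carrier_mat d d"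
  by (simp_all add: YadjX_poly_def XadjY_poly_def)

lemma poly_detX_poly: "poly detX_poly z = jdet (X z)"
  unfolding detX_poly_def poly_minor_poly detn_xrows ..

lemma poly_detY_poly: "poly detY_poly z = jdet (Y z)"
  unfolding detY_poly_def poly_minor_poly detn_yrows ..

lemma coeff_detY_poly: "coeff detY_poly d = jdet (ymat (B 0 1))"
  unfolding detY_poly_def coeff_minor_poly detn_yrows ..

lemma eval_YadjX_poly: "eval_mat z YadjX_poly = Y z * adj_mat (X z)"
proof (rule eq_matI)
  show "dim_row (eval_mat z YadjX_poly) = dim_row (Y z * adj_mat (X z))"
       "dim_col (eval_mat z YadjX_poly) = dim_col (Y z * adj_mat (X z))"
    using adj_mat(1)[OF xmat_carrier] by (simp_all add: YadjX_poly_def)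
  fix k i assume "k < dim_row (Y z * adj_mat (X z))" "i < dim_col (Y z * adj_mat (X z))"
  then have ki: "k < d" "i < d" using adj_mat(1)[OF xmat_carrier] by auto
  show "eval_mat z YadjX_poly $$ (k, i) = (Y z * adj_mat (X z)) $$ (k, i)"
    using ki by (simp add: YadjX_poly_def poly_minor_poly detn_xrows_with_yrow)
qed

lemma eval_XadjY_poly: "eval_mat z XadjY_poly = X z * adj_mat (Y z)"
proof (rule eq_matI)
  show "dim_row (eval_mat z XadjY_poly) = dim_row (X z * adj_mat (Y z))"
       "dim_col (eval_mat z XadjY_poly) = dim_col (X z * adj_mat (Y z))"
    using adj_mat(1)[OF ymat_carrier] by (simp_all add: XadjY_poly_def)
  fix k i assume "k < dim_row (X z * adj_mat (Y z))" "i < dim_col (X z * adj_mat (Y z))"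
  then have ki: "k < d" "i < d" using adj_mat(1)[OF ymat_carrier] by auto
  show "eval_mat z XadjY_poly $$ (k, i) = (X z * adj_mat (Y z)) $$ (k, i)"
    using ki by (simp add: XadjY_poly_def poly_minor_poly detn_yrows_with_xrow)
qed

lemma coeff_XadjY_poly: "k < d \<Longrightarrow> i < d \<Longrightarrow> coeff (XadjY_poly $$ (k,i)) d = (xmat (B 0 1) * adj_mat (ymat (B 0 1))) $$ (k, i)"
  by (simp add: XadjY_poly_def coeff_minor_poly detn_yrows_with_xrow)

lemma Y_0_eq_0: "Y 0 = 0\<^sub>m d d"
  by (rule eq_matI) (auto simp: ymat_def in_lin_span_a_coords B_at_0)

lemma det_X_0_ne_0: "jdet (X 0) \<noteq> 0"
  unfolding xmat_def detn_eq_det[symmetric]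
  by (rule detn_coords_ne_0[OF B_at_0 B_lin_indep]) (simp_all add: coords_lincomb_a)

lemma X_infinity_eq_0: "xmat (B 0 1) = 0\<^sub>m d d"
  by (rule eq_matI) (auto simp: xmat_def in_lin_span_c_coords B_at_infinity)

lemma det_Y_infinity_ne_0: "jdet (ymat (B 0 1)) \<noteq> 0"
  unfolding ymat_def detn_eq_det[symmetric]
  by (rule detn_coords_ne_0[OF B_at_infinity B_lin_indep]) (simp_all add: coords_lincomb_c)

lemma Y_1_eq_X_1: "Y 1 = X 1"
  by (rule eq_matI) (auto simp: xmat_def ymat_def in_lin_span_a_plus_c_coords B_at_1)

lemma YX_poly_dims[simp]: "dim_row YadjX_poly = d" "dim_col YadjX_poly = d" "dim_row XadjY_poly = d" "dim_col XadjY_poly = d"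
  by (simp_all add: YadjX_poly_def XadjY_poly_def)

lemma detY_poly_nz: "detY_poly \<noteq> 0" and degree_detY_poly: "degree detY_poly = d"
proof -
  have c: "coeff detY_poly d \<noteq> 0" using coeff_detY_poly det_Y_infinity_ne_0 by simp
  then show "detY_poly \<noteq> 0" by auto
  have "d \<le> degree detY_poly" using c by (rule le_degree)
  then show "degree detY_poly = d"
    using minor_poly_degree[of "\<lambda>r l. R (d + r) l"] unfolding detY_poly_def by simp
qed

lemma degree_XadjY_poly: "k < d \<Longrightarrow> i < d \<Longrightarrow> degree (XadjY_poly $$ (k,i)) \<le> d - 1"
proof -
  assume ki: "k < d" "i < d"
  have "coeff (XadjY_poly $$ (k,i)) d = 0"
    using ki coeff_XadjY_poly X_infinity_eq_0 adj_mat(1)[OF ymat_carrier]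
    by simp
  moreover have "degree (XadjY_poly $$ (k,i)) \<le> d"
    using ki by (simp add: XadjY_poly_def minor_poly_degree)
  ultimately show ?thesis using degree_le_diff_1 d_pos by blast
qed

lemma det_XadjY_poly: "jdet XadjY_poly = detX_poly * detY_poly ^ (d - 1)"
proof (rule poly_eq_on_infinite[OF infinite_nonroots[OF detY_poly_nz]])
  fix z assume "z \<in> {z. poly detY_poly z \<noteq> 0}"
  then have nz: "jdet (Y z) \<noteq> 0" using poly_detY_poly by simp
  have "poly (jdet XadjY_poly) z = jdet (eval_mat z XadjY_poly)" by (simp add: eval_mat_det)
  also have "\<dots> = jdet (X z * adj_mat (Y z))" by (simp add: eval_XadjY_poly)
  also have "\<dots> = jdet (X z) * jdet (adj_mat (Y z))"
    by (rule det_mult[OF xmat_carrier adj_mat(1)[OF ymat_carrier]])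
  also have "\<dots> = jdet (X z) * jdet (Y z) ^ (d - 1)"
    using det_adj_mat[OF ymat_carrier nz d_pos] by simp
  also have "\<dots> = poly (detX_poly * detY_poly ^ (d - 1)) z" by (simp add: poly_detX_poly poly_detY_poly)
  finally show "poly (jdet XadjY_poly) z = poly (detX_poly * detY_poly ^ (d - 1)) z" .
qed

lemma detX_poly_nz: "detX_poly \<noteq> 0"
  using poly_detX_poly[of 0] det_X_0_ne_0 by auto

lemma degree_detX_poly: "degree detX_poly = 0"
proof -
  have "degree (jdet XadjY_poly) \<le> (d - 1) * d"
    by (rule degree_det_le[OF _ XadjY_poly_carrier]) (use degree_XadjY_poly in force)
  moreover have "degree (detX_poly * detY_poly ^ (d - 1)) = degree detX_poly + (d - 1) * d"
    using detX_poly_nz detY_poly_nz by (simp add: degree_mult_eq degree_power_eq degree_detY_poly)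
  ultimately show ?thesis using det_XadjY_poly by simp
qed

definition \<alpha> where "\<alpha> = jdet (X 0)"

lemma det_X: "jdet (X z) = \<alpha>"
  using poly_degree_0_const[OF degree_detX_poly, of z 0] by (simp add: poly_detX_poly \<alpha>_def)

lemma \<alpha>_nz: "\<alpha> \<noteq> 0" using det_X_0_ne_0 by (simp add: \<alpha>_def)

lemma YadjX_poly_at_0: "k < d \<Longrightarrow> i < d \<Longrightarrow> poly (YadjX_poly $$ (k,i)) 0 = 0"
proof -
  assume ki: "k < d" "i < d"
  have "poly (YadjX_poly $$ (k,i)) 0 = eval_mat 0 YadjX_poly $$ (k,i)"
    using ki by (simp add: YadjX_poly_def)
  also have "\<dots> = (Y 0 * adj_mat (X 0)) $$ (k,i)" by (simp add: eval_YadjX_poly)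
  also have "\<dots> = 0" using ki by (simp add: Y_0_eq_0)
  finally show ?thesis .
qed

definition G_poly where "G_poly = Matrix.mat d d (\<lambda>(k,i). Polynomial.smult (1 / \<alpha>) (YadjX_poly $$ (k,i) div [:0,1:]))"

lemma G_poly_carrier[simp]: "G_poly \<in> carrier_mat d d" by (simp add: G_poly_def)
lemma G_poly_dims[simp]: "dim_row G_poly = d" "dim_col G_poly = d" by (simp_all add: G_poly_def)

abbreviation G where "G z \<equiv> eval_mat z G_poly"

lemma G_carrier[simp]: "G z \<in> carrier_mat d d" by simp

lemma eval_YadjX_poly_G: "eval_mat z YadjX_poly = (z * \<alpha>) \<cdot>\<^sub>m G z"
proof (rule eq_matI)
  fix k i assume "k < dim_row ((z * \<alpha>) \<cdot>\<^sub>m G z)" "i < dim_col ((z * \<alpha>) \<cdot>\<^sub>m G z)"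
  then have ki: "k < d" "i < d" by (auto simp: G_poly_def)
  have e: "YadjX_poly $$ (k,i) = [:0,1:] * (YadjX_poly $$ (k,i) div [:0,1:])"
    by (rule poly_eq_x_mult_div_x[OF YadjX_poly_at_0[OF ki]])
  have "poly (YadjX_poly $$ (k,i)) z = z * poly (YadjX_poly $$ (k,i) div [:0,1:]) z"
    by (subst e) simp
  then show "eval_mat z YadjX_poly $$ (k,i) = ((z * \<alpha>) \<cdot>\<^sub>m G z) $$ (k,i)"
    using ki \<alpha>_nz by (simp add: G_poly_def)
qed (auto simp: YadjX_poly_def G_poly_def)

lemma YadjX_mult_X: "eval_mat z YadjX_poly * X z = \<alpha> \<cdot>\<^sub>m Y z"
proof -
  have "eval_mat z YadjX_poly * X z = Y z * (adj_mat (X z) * X z)"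
    by (simp add: eval_YadjX_poly assoc_mult_mat[OF ymat_carrier adj_mat(1)[OF xmat_carrier] xmat_carrier])
  also have "\<dots> = Y z * (\<alpha> \<cdot>\<^sub>m 1\<^sub>m d)" using adj_mat(3)[OF xmat_carrier] det_X by simp
  also have "\<dots> = \<alpha> \<cdot>\<^sub>m Y z" by (simp add: mult_smult_distrib[OF ymat_carrier one_carrier_mat])
  finally show ?thesis .
qed

lemma Y_eq_G_X: "Y z = z \<cdot>\<^sub>m (G z * X z)"
proof (rule smult_mat_cancel[OF _ \<alpha>_nz])
  have "\<alpha> \<cdot>\<^sub>m Y z = ((z * \<alpha>) \<cdot>\<^sub>m G z) * X z" using YadjX_mult_X eval_YadjX_poly_G by simp
  also have "\<dots> = (z * \<alpha>) \<cdot>\<^sub>m (G z * X z)" by (rule mult_smult_assoc_mat[OF G_carrier xmat_carrier])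
  finally show "\<alpha> \<cdot>\<^sub>m Y z = \<alpha> \<cdot>\<^sub>m (z \<cdot>\<^sub>m (G z * X z))" by (simp add: smult_smult_mat mult.commute)
qed

lemma detY_poly_eq: "detY_poly = Polynomial.smult \<alpha> ([:0,1:] ^ d * jdet G_poly)"
proof (rule poly_eq_on_infinite[of UNIV])
  show "infinite (UNIV :: complex set)" by (rule infinite_UNIV_char_0)
  fix z :: complex
  have "poly detY_poly z = jdet (Y z)" by (rule poly_detY_poly)
  also have "\<dots> = z ^ d * (jdet (G z) * jdet (X z))"
    by (simp add: Y_eq_G_X det_mult[OF G_carrier xmat_carrier])
  also have "\<dots> = poly (Polynomial.smult \<alpha> ([:0,1:] ^ d * jdet G_poly)) z"
    by (simp add: det_X eval_mat_det)
  finally show "poly detY_poly z = poly (Polynomial.smult \<alpha> ([:0,1:] ^ d * jdet G_poly)) z" .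
qed

lemma det_G_poly_nz: "jdet G_poly \<noteq> 0" using detY_poly_nz detY_poly_eq by auto

lemma degree_det_G_poly: "degree (jdet G_poly) = 0"
proof -
  have "degree detY_poly = d + degree (jdet G_poly)"
    unfolding detY_poly_eq using \<alpha>_nz det_G_poly_nz by (simp add: degree_mult_eq degree_power_eq)
  then show ?thesis using degree_detY_poly by simp
qed

definition \<gamma> where "\<gamma> = jdet (G 0)"

lemma det_G: "jdet (G z) = \<gamma>"
  unfolding \<gamma>_def eval_mat_det using poly_degree_0_const[OF degree_det_G_poly] .

lemma \<gamma>_nz: "\<gamma> \<noteq> 0"
proof -
  have "coeff (jdet G_poly) 0 \<noteq> 0" using det_G_poly_nz degree_det_G_poly leading_coeff_0_iff by metis
  then show ?thesis unfolding \<gamma>_def eval_mat_det by (simp add: poly_altdef degree_det_G_poly)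
qed

lemma XadjY_mult_Y: "eval_mat z XadjY_poly * Y z = jdet (Y z) \<cdot>\<^sub>m X z"
proof -
  have "eval_mat z XadjY_poly * Y z = X z * (adj_mat (Y z) * Y z)"
    by (simp add: eval_XadjY_poly assoc_mult_mat[OF xmat_carrier adj_mat(1)[OF ymat_carrier] ymat_carrier])
  also have "\<dots> = X z * (jdet (Y z) \<cdot>\<^sub>m 1\<^sub>m d)" using adj_mat(3)[OF ymat_carrier] by simp
  also have "\<dots> = jdet (Y z) \<cdot>\<^sub>m X z" by (simp add: mult_smult_distrib[OF xmat_carrier one_carrier_mat])
  finally show ?thesis .
qed

lemma det_Y: "jdet (Y z) = z ^ d * \<gamma> * \<alpha>"
proof -
  have "jdet (Y z) = jdet (z \<cdot>\<^sub>m (G z * X z))" using Y_eq_G_X[of z] by (rule arg_cong)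
  also have "\<dots> = z ^ d * jdet (G z * X z)" by (simp add: det_smult)
  also have "jdet (G z * X z) = jdet (G z) * jdet (X z)" by (rule det_mult[OF G_carrier xmat_carrier])
  also have "jdet (G z) = \<gamma>" by (rule det_G)
  also have "jdet (X z) = \<alpha>" by (rule det_X)
  finally show ?thesis by simp
qed

lemma XadjY_mult_G:
  assumes "z \<noteq> 0"
  shows "eval_mat z XadjY_poly * G z = (\<alpha> * \<gamma> * z ^ (d - 1)) \<cdot>\<^sub>m 1\<^sub>m d"
proof (rule mat_mult_right_cancel[OF _ _ xmat_carrier])
  let ?N = "eval_mat z XadjY_poly" and ?c = "\<alpha> * \<gamma> * z ^ (d - 1)"
  have N: "?N \<in> carrier_mat d d" by simp
  show "?N * G z \<in> carrier_mat d d" "?c \<cdot>\<^sub>m 1\<^sub>m d \<in> carrier_mat d d" by auto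
  show "jdet (X z) \<noteq> 0" using det_X \<alpha>_nz by simp
  have "z \<cdot>\<^sub>m (?N * G z * X z) = ?N * (z \<cdot>\<^sub>m (G z * X z))"
    by (simp add: assoc_mult_mat[OF N G_carrier xmat_carrier]
        mult_smult_distrib[OF N mult_carrier_mat[OF G_carrier xmat_carrier]])
  also have "\<dots> = jdet (Y z) \<cdot>\<^sub>m X z" using XadjY_mult_Y Y_eq_G_X by simp
  also have "\<dots> = z \<cdot>\<^sub>m (?c \<cdot>\<^sub>m 1\<^sub>m d * X z)"
  proof -
    have "z ^ d = z * z ^ (d - 1)" using d_pos by (simp add: power_eq_if)
    then show ?thesis
      by (simp add: det_Y smult_smult_mat mult_smult_assoc_mat[OF one_carrier_mat xmat_carrier] mult_ac)
  qed
  finally show "?N * G z * X z = ?c \<cdot>\<^sub>m 1\<^sub>m d * X z"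
    by (rule smult_mat_cancel) (rule assms)
qed

definition scalar_poly where "scalar_poly = Polynomial.smult (\<alpha> * \<gamma>) ([:0,1:] ^ (d - 1))"

lemma XadjY_poly_mult_G_poly: "XadjY_poly * G_poly = scalar_poly \<cdot>\<^sub>m 1\<^sub>m d"
proof (rule eq_matI)
  fix k i assume "k < dim_row (scalar_poly \<cdot>\<^sub>m 1\<^sub>m d)" "i < dim_col (scalar_poly \<cdot>\<^sub>m 1\<^sub>m d)"
  then have ki: "k < d" "i < d" by auto
  have inf: "infinite {z::complex. z \<noteq> 0}"
  proof -
    have "{z::complex. z \<noteq> 0} = UNIV - {0}" by auto
    then show ?thesis using infinite_UNIV_char_0[where 'a=complex] by simp
  qed
  show "(XadjY_poly * G_poly) $$ (k,i) = (scalar_poly \<cdot>\<^sub>m 1\<^sub>m d) $$ (k,i)"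
  proof (rule poly_eq_on_infinite[OF inf])
    fix z :: complex assume "z \<in> {z. z \<noteq> 0}"
    then have z: "z \<noteq> 0" by simp
    have "poly ((XadjY_poly * G_poly) $$ (k,i)) z = eval_mat z (XadjY_poly * G_poly) $$ (k,i)"
      using ki by simp
    also have "\<dots> = (eval_mat z XadjY_poly * G z) $$ (k,i)"
      by (simp add: eval_mat_mult[OF XadjY_poly_carrier G_poly_carrier])
    also have "\<dots> = ((\<alpha> * \<gamma> * z ^ (d - 1)) \<cdot>\<^sub>m 1\<^sub>m d) $$ (k,i)" by (simp add: XadjY_mult_G[OF z])
    also have "\<dots> = poly ((scalar_poly \<cdot>\<^sub>m 1\<^sub>m d) $$ (k,i)) z" using ki by (simp add: scalar_poly_def)
    finally show "poly ((XadjY_poly * G_poly) $$ (k,i)) z = poly ((scalar_poly \<cdot>\<^sub>m 1\<^sub>m d) $$ (k,i)) z" .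
  qed
qed auto

lemma scalar_poly_adj_G_poly: "scalar_poly \<cdot>\<^sub>m adj_mat G_poly = jdet G_poly \<cdot>\<^sub>m XadjY_poly"
proof -
  have adj: "adj_mat G_poly \<in> carrier_mat d d" by (rule adj_mat(1)[OF G_poly_carrier])
  have "scalar_poly \<cdot>\<^sub>m adj_mat G_poly = (XadjY_poly * G_poly) * adj_mat G_poly"
    using adj by (simp add: XadjY_poly_mult_G_poly mult_smult_assoc_mat[OF one_carrier_mat adj])
  also have "\<dots> = XadjY_poly * (G_poly * adj_mat G_poly)"
    by (rule assoc_mult_mat[OF XadjY_poly_carrier G_poly_carrier adj])
  also have "\<dots> = jdet G_poly \<cdot>\<^sub>m XadjY_poly"
    by (simp add: adj_mat(2)[OF G_poly_carrier] mult_smult_distrib[OF XadjY_poly_carrier one_carrier_mat])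
  finally show ?thesis .
qed

lemma degree_adj_G_poly:
  assumes "k < d" "i < d"
  shows "degree (adj_mat G_poly $$ (k,i)) = 0"
proof (cases "adj_mat G_poly $$ (k,i) = 0")
  case False
  have "scalar_poly \<noteq> 0" "degree scalar_poly = d - 1"
    using \<alpha>_nz \<gamma>_nz by (auto simp: scalar_poly_def degree_power_eq)
  then have "d - 1 + degree (adj_mat G_poly $$ (k,i)) = degree (scalar_poly * adj_mat G_poly $$ (k,i))"
    using False by (simp add: degree_mult_eq)
  also have "scalar_poly * adj_mat G_poly $$ (k,i) = jdet G_poly * XadjY_poly $$ (k,i)"
    using arg_cong[OF scalar_poly_adj_G_poly, of "\<lambda>M. M $$ (k,i)"] assms by simp
  also have "degree \<dots> \<le> d - 1"
    using degree_mult_le[of "jdet G_poly" "XadjY_poly $$ (k,i)"] degree_det_G_poly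
      degree_XadjY_poly[OF assms] by simp
  finally show ?thesis by simp
qed simp

definition adjG where "adjG = eval_mat 0 (adj_mat G_poly)"

lemma eval_adj_G_poly: "eval_mat z (adj_mat G_poly) = adjG"
  unfolding adjG_def
proof (rule eq_matI)
  fix k i assume "k < dim_row (eval_mat 0 (adj_mat G_poly))" "i < dim_col (eval_mat 0 (adj_mat G_poly))"
  then have ki: "k < d" "i < d" by auto
  have "poly (adj_mat G_poly $$ (k,i)) z = poly (adj_mat G_poly $$ (k,i)) 0"
    by (rule poly_degree_0_const[OF degree_adj_G_poly[OF ki]])
  then show "eval_mat z (adj_mat G_poly) $$ (k,i) = eval_mat 0 (adj_mat G_poly) $$ (k,i)"
    using ki by simp
qed auto

lemma adjG_carrier[simp]: "adjG \<in> carrier_mat d d"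
  using adj_mat(1)[OF G_poly_carrier] by (simp only: adjG_def map_carrier_mat)

lemma G_mult_adjG: "G z * adjG = \<gamma> \<cdot>\<^sub>m 1\<^sub>m d"
proof -
  have "eval_mat z (G_poly * adj_mat G_poly) = G z * adjG"
    by (simp add: eval_mat_mult[OF G_poly_carrier adj_mat(1)[OF G_poly_carrier]] eval_adj_G_poly)
  moreover have "eval_mat z (G_poly * adj_mat G_poly) = \<gamma> \<cdot>\<^sub>m 1\<^sub>m d"
    using adj_mat(2)[OF G_poly_carrier] det_G[of z]
    by (simp add: eval_mat_smult eval_mat_one eval_mat_det)
  ultimately show ?thesis by simp
qed

lemma adjG_mult_G0: "adjG * G 0 = \<gamma> \<cdot>\<^sub>m 1\<^sub>m d"
proof -
  have "eval_mat 0 (adj_mat G_poly * G_poly) = adjG * G 0"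
    by (simp add: eval_mat_mult[OF adj_mat(1)[OF G_poly_carrier] G_poly_carrier] eval_adj_G_poly)
  moreover have "eval_mat 0 (adj_mat G_poly * G_poly) = \<gamma> \<cdot>\<^sub>m 1\<^sub>m d"
    using adj_mat(3)[OF G_poly_carrier] det_G[of 0]
    by (simp add: eval_mat_smult eval_mat_one eval_mat_det)
  ultimately show ?thesis by simp
qed

lemma G_const: "G z = G 0"
proof -
  have "G z = G z * 1\<^sub>m d" by simp
  also have "1\<^sub>m d = (1 / \<gamma>) \<cdot>\<^sub>m (adjG * G 0)" using \<gamma>_nz by (simp add: adjG_mult_G0 smult_smult_mat)
  also have "G z * \<dots> = (1 / \<gamma>) \<cdot>\<^sub>m (G z * (adjG * G 0))"
    by (rule mult_smult_distrib[OF G_carrier mult_carrier_mat[OF adjG_carrier G_carrier]])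
  also have "G z * (adjG * G 0) = (G z * adjG) * G 0"
    by (rule assoc_mult_mat[symmetric, OF G_carrier adjG_carrier G_carrier])
  also have "\<dots> = \<gamma> \<cdot>\<^sub>m G 0" by (simp add: G_mult_adjG mult_smult_assoc_mat[OF one_carrier_mat G_carrier])
  finally show ?thesis using \<gamma>_nz by (simp add: smult_smult_mat)
qed

lemma G_0_eq_1: "G 0 = 1\<^sub>m d"
proof (rule mat_mult_right_cancel[OF G_carrier one_carrier_mat xmat_carrier])
  show "jdet (X 1) \<noteq> 0" using det_X \<alpha>_nz by simp
  show "G 0 * X 1 = 1\<^sub>m d * X 1" using Y_eq_G_X[of 1] Y_1_eq_X_1 G_const[of 1] by simp
qed

lemma Y_eq_z_X: "Y z = z \<cdot>\<^sub>m X z"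
  using Y_eq_G_X[of z] G_const[of z] G_0_eq_1 by simp

theorem lin_span_curve: "lin_span d (B 1 z) = lin_span d (\<lambda>j i. a j i + z * c j i)"
proof (rule lin_span_transform)
  show "detn d (\<lambda>r j. xcoord (B 1 z j) r) \<noteq> 0"
    using det_X[of z] \<alpha>_nz by (simp add: detn_eq_det xmat_def)
  fix j assume j: "j < d"
  have "ycoord (B 1 z j) r = z * xcoord (B 1 z j) r" if "r < d" for r
  proof -
    have "Y z $$ (r, j) = (z \<cdot>\<^sub>m X z) $$ (r, j)" by (simp add: Y_eq_z_X)
    then show ?thesis using that j by (simp add: xmat_def ymat_def)
  qed
  then have "lincomb d (ycoord (B 1 z j)) c = (\<lambda>i. z * lincomb d (xcoord (B 1 z j)) c i)"
    by (simp add: lincomb_def sum_distrib_left mult.assoc)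
  moreover have "B 1 z j = (\<lambda>i. lincomb d (xcoord (B 1 z j)) a i + lincomb d (ycoord (B 1 z j)) c i)"
    using coords_decomp B_cvec j by simp
  ultimately show "B 1 z j = lincomb d (\<lambda>r. xcoord (B 1 z j) r) (\<lambda>j i. a j i + z * c j i)"
    by (simp add: lincomb_add_vectors lincomb_scale_vectors)
qed

end

section \<open>Existence: the standard curve\<close>

lemma bform_lin_left:
  "bform n om (\<lambda>i. p * x i + q * y i) w = p * bform n om x w + q * bform n om y w"
  unfolding bform_def by (simp add: algebra_simps sum.distrib sum_distrib_left)

lemma bform_lin_right:
  "bform n om w (\<lambda>i. p * x i + q * y i) = p * bform n om w x + q * bform n om w y"
  unfolding bform_def by (simp add: algebra_simps sum.distrib sum_distrib_left)

lemma bform_lincomb_left: "bform n om (lincomb k x e) w = (\<Sum>j<k. x j * bform n om (e j) w)"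
  unfolding bform_def lincomb_def
  by (simp add: sum_distrib_left sum_distrib_right mult_ac sum.swap[of _ "{..<k}"])

lemma bform_lincomb_right: "bform n om w (lincomb k x e) = (\<Sum>j<k. x j * bform n om w (e j))"
  unfolding bform_def lincomb_def
  by (simp add: sum_distrib_left sum_distrib_right mult_ac sum.swap[of _ "{..<k}"])

lemma bform_eq_0_on_lin_span:
  assumes "\<And>j j'. j < k \<Longrightarrow> j' < k \<Longrightarrow> bform n om (e j) (e j') = 0"
    and "x \<in> lin_span k e" "y \<in> lin_span k e"
  shows "bform n om x y = 0"
proof -
  obtain p q where "x = lincomb k p e" "y = lincomb k q e"
    using assms(2,3) unfolding lin_span_def by blast
  then show ?thesis
    by (simp add: bform_lincomb_left bform_lincomb_right assms(1))
qed

definition std_curve :: "nat \<Rightarrow> (nat \<Rightarrow> nat \<Rightarrow> complex) \<Rightarrow> (nat \<Rightarrow> nat \<Rightarrow> complex) \<Rightarrow>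
    complex option \<Rightarrow> (nat \<Rightarrow> complex) set" where
  "std_curve d a c x = (case x of None \<Rightarrow> lin_span d c | Some z \<Rightarrow> lin_span d (\<lambda>j i. a j i + z * c j i))"

definition std_plucker :: "(nat \<Rightarrow> nat \<Rightarrow> complex) \<Rightarrow> (nat \<Rightarrow> nat \<Rightarrow> complex) \<Rightarrow> nat \<Rightarrow> nat set \<Rightarrow> complex poly" where
  "std_plucker a c d I = (\<Sum>p\<in>{p. p permutes {0..<d}}. Polynomial.smult (of_int (sign p))
      (\<Prod>r<d. [: a (p r) (sorted_list_of_set I ! r), c (p r) (sorted_list_of_set I ! r) :]))"

lemma std_plucker:
  "degree (std_plucker a c d I) \<le> d"
  "hom_eval d (std_plucker a c d I) s t = plucker d (\<lambda>j i. s * a j i + t * c j i) I"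
proof -
  let ?L = "\<lambda>p r. [: a (p r) (sorted_list_of_set I ! r), c (p r) (sorted_list_of_set I ! r) :]"
  have H: "degree (\<Prod>r<d. ?L p r) \<le> card {..<d}
      \<and> hom_eval (card {..<d}) (\<Prod>r<d. ?L p r) s t = (\<Prod>r<d. hom_eval 1 (?L p r) s t)" for p
    by (rule hom_eval_prod_linear) auto
  show "degree (std_plucker a c d I) \<le> d"
    unfolding std_plucker_def
    by (rule degree_sum_le[OF finite_permutations[OF finite_atLeastLessThan]])
      (use H in \<open>auto intro: order_trans[OF degree_smult_le]\<close>)
  show "hom_eval d (std_plucker a c d I) s t = plucker d (\<lambda>j i. s * a j i + t * c j i) I"
    unfolding std_plucker_def hom_eval_sum hom_eval_smult plucker_def detn_def
    by (rule sum.cong) (use H in \<open>auto simp: hom_eval_linear\<close>)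
qed

context frame
begin

lemma std_curve_basis:
  assumes "lin_indep d a" "lin_indep d c" "lin_span d a \<inter> lin_span d c = {\<lambda>_. 0}" "(s, t) \<noteq> (0, 0)"
  shows "is_basis (2*d) d (std_curve d a c (p1pt s t)) (\<lambda>j i. s * a j i + t * c j i)"
proof -
  have cvec: "(\<lambda>i. s * a j i + t * c j i) \<in> cvec (2*d)" if "j < d" for j
    using a_cvec[OF that] c_cvec[OF that] by (auto simp: cvec_def)
  show ?thesis
  proof (cases "s = 0")
    case True
    then have t: "t \<noteq> 0" using assms(4) by auto
    have b: "(\<lambda>i. s * a j i + t * c j i) = lincomb d (\<lambda>r. if r = j then t else 0) c" if "j < d" for j
      using True lincomb_scalar[OF that, of t c] by simp
    have "detn d (\<lambda>r j. if r = j then t else 0) \<noteq> 0" using t by (simp add: detn_scalar)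
    note transform = lin_span_transform[OF b this] lin_indep_transform[OF b this assms(2)]
    have "std_curve d a c (p1pt s t) = lin_span d c" using True by (simp add: std_curve_def p1pt_def)
    then show ?thesis unfolding is_basis_iff using cvec transform by simp
  next
    case False
    let ?e = "\<lambda>j i. a j i + t / s * c j i"
    have b: "(\<lambda>i. s * a j i + t * c j i) = lincomb d (\<lambda>r. if r = j then s else 0) ?e" if "j < d" for j
      using False lincomb_scalar[OF that, of s ?e] by (auto simp: field_simps)
    have "detn d (\<lambda>r j. if r = j then s else 0) \<noteq> 0" using False by (simp add: detn_scalar)
    note transform = lin_span_transform[OF b this]
      lin_indep_transform[OF b this lin_indep_shear[OF assms(1,3), of "t / s"]]
    have "std_curve d a c (p1pt s t) = lin_span d ?e" using False by (simp add: std_curve_def p1pt_def)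
    then show ?thesis unfolding is_basis_iff using cvec transform by simp
  qed
qed

lemma std_plucker_no_common_zero:
  assumes "(s, t) \<noteq> (0, 0)"
  shows "\<exists>I\<in>psubsets d. hom_eval d (std_plucker a c d I) s t \<noteq> 0"
proof (rule ccontr)
  let ?b = "\<lambda>j i. s * a j i + t * c j i"
  assume "\<not> ?thesis"
  then have "plucker d ?b I = 0" if "I \<in> psubsets d" for I
    using that std_plucker(2)[of d a c I s t] by auto
  then have minors: "detn d (\<lambda>r j. \<Sum>l<2*d. Z r l * ?b j l) = 0" for Z
    unfolding cauchy_binet by (intro sum.neutral) (auto simp: image_inj_tuple_in_psubsets)
  have "(\<Sum>l<2*d. R r l * ?b j l) = s * (\<Sum>l<2*d. R r l * a j l) + t * (\<Sum>l<2*d. R r l * c j l)" for r j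
    by (simp add: distrib_left sum.distrib sum_distrib_left mult_ac)
  then have "(\<Sum>l<2*d. R r l * ?b j l) = (if r = j then s else 0)"
    and "(\<Sum>l<2*d. R (d + r) l * ?b j l) = (if r = j then t else 0)" if "r < d" "j < d" for r j
    using that R_a R_c by simp_all
  then have "detn d (\<lambda>r j. if r = j then s else 0) = detn d (\<lambda>r j. \<Sum>l<2*d. R r l * ?b j l)"
    and "detn d (\<lambda>r j. if r = j then t else 0) = detn d (\<lambda>r j. \<Sum>l<2*d. R (d + r) l * ?b j l)"
    by (simp_all cong: detn_cong)
  then have "detn d (\<lambda>r j. if r = j then s else 0) = 0" "detn d (\<lambda>r j. if r = j then t else 0) = 0"
    using minors[of R] minors[of "\<lambda>r l. R (d + r) l"] by simp_all
  then show False using assms by (simp add: detn_scalar)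
qed

lemma grass_morphism_std_curve:
  assumes "lin_indep d a" "lin_indep d c" "lin_span d a \<inter> lin_span d c = {\<lambda>_. 0}"
  shows "grass_morphism_deg d (std_curve d a c) d"
  unfolding grass_morphism_deg_def
proof (intro exI[of _ "std_plucker a c d"] conjI allI impI)
  show "degree (std_plucker a c d I) \<le> d" for I by (rule std_plucker(1))
  show "\<exists>I\<in>psubsets d. hom_eval d (std_plucker a c d I) s t \<noteq> 0" if "(s, t) \<noteq> (0, 0)" for s t
    using std_plucker_no_common_zero[OF that] .
  show "\<exists>b. is_basis (2 * d) d (std_curve d a c (p1pt s t)) b
      \<and> (\<forall>I\<in>psubsets d. plucker d b I = hom_eval d (std_plucker a c d I) s t)"
    if "(s, t) \<noteq> (0, 0)" for s t
    by (intro exI[of _ "\<lambda>j i. s * a j i + t * c j i"])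
      (simp add: std_curve_basis[OF assms that] std_plucker(2))
qed

lemma in_LG_std_curve:
  assumes "lin_indep d a" "lin_indep d c" "lin_span d a \<inter> lin_span d c = {\<lambda>_. 0}"
    and iso_a: "\<And>x y. x \<in> lin_span d a \<Longrightarrow> y \<in> lin_span d a \<Longrightarrow> bform (2*d) om x y = 0"
    and iso_c: "\<And>x y. x \<in> lin_span d c \<Longrightarrow> y \<in> lin_span d c \<Longrightarrow> bform (2*d) om x y = 0"
    and iso_ac: "\<And>j k. j < d \<Longrightarrow> k < d \<Longrightarrow>
      bform (2*d) om (\<lambda>i. a j i + c j i) (\<lambda>i. a k i + c k i) = 0"
  shows "in_LG d om (std_curve d a c x)"
proof (cases x)
  case None
  have "is_basis (2*d) d (lin_span d c) c" unfolding is_basis_iff using c_cvec assms(2) by auto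
  then show ?thesis using None iso_c unfolding in_LG_def std_curve_def by auto
next
  case (Some z)
  let ?e = "\<lambda>j i. a j i + z * c j i"
  have "?e j \<in> cvec (2*d)" if "j < d" for j
    using a_cvec[OF that] c_cvec[OF that] by (auto simp: cvec_def)
  then have basis: "is_basis (2*d) d (lin_span d ?e) ?e"
    unfolding is_basis_iff using lin_indep_shear[OF assms(1,3)] by auto
  have "bform (2*d) om (?e j) (?e k) = 0" if "j < d" "k < d" for j k
  proof -
    have aa: "bform (2*d) om (a j) (a k) = 0" and cc: "bform (2*d) om (c j) (c k) = 0"
      using iso_a iso_c vector_in_lin_span that by blast+
    have "bform (2*d) om (a j) (c k) + bform (2*d) om (c j) (a k) = 0"
      using iso_ac[OF that] bform_lin_left[of "2*d" om 1 "a j" 1 "c j"]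
        bform_lin_right[of "2*d" om _ 1 "a k" 1 "c k"] aa cc by simp
    moreover have "bform (2*d) om (?e j) (?e k)
        = bform (2*d) om (a j) (a k) + z * (bform (2*d) om (a j) (c k) + bform (2*d) om (c j) (a k))
          + z * z * bform (2*d) om (c j) (c k)"
      using bform_lin_left[of "2*d" om 1 "a j" z "c j"]
        bform_lin_right[of "2*d" om _ 1 "a k" z "c k"] by (simp add: algebra_simps)
    ultimately show ?thesis using aa cc by simp
  qed
  then have "\<forall>x\<in>lin_span d ?e. \<forall>y\<in>lin_span d ?e. bform (2*d) om x y = 0"
    using bform_eq_0_on_lin_span[of d "2*d" om ?e] by blast
  then show ?thesis using Some basis unfolding in_LG_def std_curve_def by auto
qed

lemma LG_morphism_std_curve:
  assumes "lin_indep d a" "lin_indep d c" "lin_span d a \<inter> lin_span d c = {\<lambda>_. 0}"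
    and "in_LG d om (lin_span d a)" "in_LG d om (lin_span d (\<lambda>j i. a j i + c j i))"
    and "in_LG d om (lin_span d c)"
  shows "LG_morphism_deg d om (std_curve d a c) d"
  unfolding LG_morphism_deg_def
proof (intro conjI allI)
  show "grass_morphism_deg d (std_curve d a c) d" by (rule grass_morphism_std_curve[OF assms(1-3)])
  show "in_LG d om (std_curve d a c x)" for x
  proof (rule in_LG_std_curve[OF assms(1-3)])
    show "bform (2*d) om x y = 0" if "x \<in> lin_span d a" "y \<in> lin_span d a" for x y
      using assms(4) that unfolding in_LG_def by blast
    show "bform (2*d) om x y = 0" if "x \<in> lin_span d c" "y \<in> lin_span d c" for x y
      using assms(6) that unfolding in_LG_def by blast
    have "(\<lambda>i. a j i + c j i) \<in> lin_span d (\<lambda>j i. a j i + c j i)" if "j < d" for j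
      using vector_in_lin_span[OF that, of "\<lambda>j i. a j i + c j i"] by simp
    then show "bform (2*d) om (\<lambda>i. a j i + c j i) (\<lambda>i. a k i + c k i) = 0" if "j < d" "k < d" for j k
      using assms(5) that unfolding in_LG_def by blast
  qed
qed

end

section \<open>Normal form of a transversal triple\<close>

lemma lin_indep_summand:
  assumes v: "\<And>j. j < d \<Longrightarrow> v j = (\<lambda>i. a j i + c j i)" and "lin_indep d v"
    and "\<And>x. lincomb d x c \<in> W" and "lin_span d v \<inter> W = {\<lambda>_. 0}"
  shows "lin_indep d a"
  unfolding lin_indep_def
proof (intro allI impI)
  fix x j assume "lincomb d x a = (\<lambda>_. 0)" "j < d"
  have "lincomb d x v = lincomb d x (\<lambda>j i. a j i + c j i)"
    by (rule lincomb_cong_vectors) (simp add: v)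
  then have "lincomb d x v = lincomb d x c"
    using \<open>lincomb d x a = (\<lambda>_. 0)\<close> by (simp add: lincomb_add_vectors)
  then have "lincomb d x v \<in> lin_span d v \<inter> W"
    using assms(3)[of x] lincomb_in_lin_span[of d x v] by simp
  then show "x j = 0" using assms(2,4) \<open>j < d\<close> unfolding lin_indep_def by auto
qed

lemma lin_span_transform_lin_indep:
  assumes "\<And>j. j < d \<Longrightarrow> b j = lincomb d (\<lambda>r. T r j) e" and "lin_indep d b"
  shows "lin_span d b = lin_span d e"
  using lin_span_transform[OF assms(1) detn_ne_0_if_lin_indep[OF assms]] .

lemma transversal_triple_normal_form:
  assumes u: "is_basis (2*d) d U u" and v: "is_basis (2*d) d V v" and w: "is_basis (2*d) d W w"
    and UV: "U \<inter> V = {\<lambda>_. 0}" and UW: "U \<inter> W = {\<lambda>_. 0}" and VW: "V \<inter> W = {\<lambda>_. 0}"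
  obtains a c R where "frame d a c R" "lin_indep d a" "lin_indep d c"
    "lin_span d a = U" "lin_span d c = W" "lin_span d (\<lambda>j i. a j i + c j i) = V"
proof -
  have u_cvec: "\<And>j. j < d \<Longrightarrow> u j \<in> cvec (2*d)" and U: "U = lin_span d u" and "lin_indep d u"
    using u unfolding is_basis_iff by auto
  have w_cvec: "\<And>j. j < d \<Longrightarrow> w j \<in> cvec (2*d)" and W: "W = lin_span d w" and "lin_indep d w"
    using w unfolding is_basis_iff by auto
  have v_cvec: "\<And>j. j < d \<Longrightarrow> v j \<in> cvec (2*d)" and V: "V = lin_span d v" and iv: "lin_indep d v"
    using v unfolding is_basis_iff by auto
  obtain R0 where "frame d u w R0"
    using frame_exists[OF u_cvec w_cvec \<open>lin_indep d u\<close> \<open>lin_indep d w\<close>] UW U W by auto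
  then interpret uw: frame d u w R0 .
  define a where "a j = lincomb d (uw.xcoord (v j)) u" for j
  define c where "c j = lincomb d (uw.ycoord (v j)) w" for j
  have v_split: "v j = (\<lambda>i. a j i + c j i)" "v j = (\<lambda>i. c j i + a j i)" if "j < d" for j
    unfolding a_def c_def using uw.coords_decomp[OF v_cvec[OF that]] by (simp_all add: add.commute)
  have a: "a j = lincomb d (\<lambda>r. uw.xcoord (v j) r) u" and c: "c j = lincomb d (\<lambda>r. uw.ycoord (v j) r) w"
    for j by (simp_all add: a_def c_def)
  have aU: "lincomb d x a \<in> U" and cW: "lincomb d x c \<in> W" for x
    unfolding U W by (simp_all only: lincomb_of_transformed[OF a] lincomb_of_transformed[OF c]
        lincomb_in_lin_span)
  have "lin_span d v \<inter> W = {\<lambda>_. 0}" "lin_span d v \<inter> U = {\<lambda>_. 0}"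
    using VW UV unfolding V by (simp_all add: Int_commute)
  then have ia: "lin_indep d a" and ic: "lin_indep d c"
    using lin_indep_summand[OF v_split(1) iv cW] lin_indep_summand[OF v_split(2) iv aU] by simp_all
  have sa: "lin_span d a = U" and sc: "lin_span d c = W"
    using lin_span_transform_lin_indep[OF a ia] lin_span_transform_lin_indep[OF c ic] U W by simp_all
  have "lin_span d (\<lambda>j i. a j i + c j i) = V" unfolding V by (rule lin_span_cong) (simp add: v_split)
  moreover have "a j \<in> cvec (2*d)" "c j \<in> cvec (2*d)" if "j < d" for j
    unfolding a_def c_def by (simp_all add: lincomb_in_cvec u_cvec w_cvec)
  then obtain R where "frame d a c R" using frame_exists ia ic sa sc UW by blast
  ultimately show ?thesis using that ia ic sa sc by blast
qed

lemma grass_morphism_basis_family: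
  assumes "grass_morphism_deg d f e"
  obtains P B where "\<And>I. degree (P I) \<le> e"
    and "\<And>s t. (s, t) \<noteq> (0, 0) \<Longrightarrow> is_basis (2*d) d (f (p1pt s t)) (B s t)"
    and "\<And>s t I. (s, t) \<noteq> (0, 0) \<Longrightarrow> I \<in> psubsets d \<Longrightarrow> plucker d (B s t) I = hom_eval e (P I) s t"
proof -
  obtain P where deg: "\<And>I. degree (P I) \<le> e"
    and ex: "\<And>s t. (s, t) \<noteq> (0, 0) \<Longrightarrow> \<exists>b. is_basis (2*d) d (f (p1pt s t)) b \<and>
                    (\<forall>I\<in>psubsets d. plucker d b I = hom_eval e (P I) s t)"
    using assms unfolding grass_morphism_deg_def by blast
  define B where "B s t = (SOME b. is_basis (2*d) d (f (p1pt s t)) b \<and>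
                    (\<forall>I\<in>psubsets d. plucker d b I = hom_eval e (P I) s t))" for s t
  have "is_basis (2*d) d (f (p1pt s t)) (B s t) \<and>
      (\<forall>I\<in>psubsets d. plucker d (B s t) I = hom_eval e (P I) s t)" if "(s, t) \<noteq> (0, 0)" for s t
    unfolding B_def by (rule someI_ex[OF ex[OF that]])
  with deg show ?thesis by (intro that[of P B]) blast+
qed

lemma grass_morphism_eq_std_curve:
  assumes "1 \<le> d" "frame d a c R" "grass_morphism_deg d f d"
    and f0: "f (Some 0) = lin_span d a" and f1: "f (Some 1) = lin_span d (\<lambda>j i. a j i + c j i)"
    and f_infinity: "f None = lin_span d c"
  shows "f = std_curve d a c"
proof -
  obtain P B where deg: "\<And>I. degree (P I) \<le> d"
    and basis: "\<And>s t. (s, t) \<noteq> (0, 0) \<Longrightarrow> is_basis (2*d) d (f (p1pt s t)) (B s t)"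
    and pl: "\<And>s t I. (s, t) \<noteq> (0, 0) \<Longrightarrow> I \<in> psubsets d \<Longrightarrow> plucker d (B s t) I = hom_eval d (P I) s t"
    using grass_morphism_basis_family[OF assms(3)] by blast
  have f_B: "f (p1pt s t) = lin_span d (B s t)" if "(s, t) \<noteq> (0, 0)" for s t
    using basis[OF that] unfolding is_basis_iff by blast
  have B_in: "B s t j \<in> f (p1pt s t)" if "(s, t) \<noteq> (0, 0)" "j < d" for s t j
    using f_B[OF that(1)] vector_in_lin_span[OF that(2)] by simp
  interpret frame d a c R by (rule assms(2))
  interpret normalized_curve d a c R P B
  proof
    show "1 \<le> d" "degree (P I) \<le> d" for I using assms(1) deg by auto
    show "B s t j \<in> cvec (2*d)" if "(s, t) \<noteq> (0, 0)" "j < d" for s t j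
      using basis[OF that(1)] that(2) unfolding is_basis_iff by blast
    show "lin_indep d (B s t)" if "(s, t) \<noteq> (0, 0)" for s t
      using basis[OF that] unfolding is_basis_iff by blast
    show "plucker d (B s t) I = hom_eval d (P I) s t" if "(s, t) \<noteq> (0, 0)" "I \<in> psubsets d" for s t I
      using pl that by blast
    show "B 1 0 j \<in> lin_span d a" "B 1 1 j \<in> lin_span d (\<lambda>j i. a j i + c j i)"
      "B 0 1 j \<in> lin_span d c" if "j < d" for j
      using B_in[of 1 0 j] B_in[of 1 1 j] B_in[of 0 1 j] that f0 f1 f_infinity
      by (simp_all add: p1pt_def)
  qed
  show ?thesis
  proof
    fix x show "f x = std_curve d a c x"
    proof (cases x)
      case (Some z)
      then show ?thesis using f_B[of 1 z] lin_span_curve by (simp add: p1pt_def std_curve_def)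
    qed (simp add: f_infinity std_curve_def)
  qed
qed

theorem mainTheorem4:
  fixes d :: nat and om :: "nat \<Rightarrow> nat \<Rightarrow> complex" and U V W :: "(nat \<Rightarrow> complex) set"
  assumes "d \<ge> 1"
    and "symplectic_form (2*d) om"
    and "in_LG d om U" and "in_LG d om V" and "in_LG d om W"
    and "U \<inter> V = {\<lambda>_. 0}" and "U \<inter> W = {\<lambda>_. 0}" and "V \<inter> W = {\<lambda>_. 0}"
  shows "\<exists>!f. LG_morphism_deg d om f d \<and> f (Some 0) = U \<and> f (Some 1) = V \<and> f None = W"
proof -
  obtain u v w where bases: "is_basis (2*d) d U u" "is_basis (2*d) d V v" "is_basis (2*d) d W w"
    using assms(3-5) unfolding in_LG_def by blast
  obtain a c R where fr: "frame d a c R" and ind: "lin_indep d a" "lin_indep d c"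
    and U: "lin_span d a = U" and W: "lin_span d c = W" and V: "lin_span d (\<lambda>j i. a j i + c j i) = V"
    using transversal_triple_normal_form[OF bases assms(6-8)] by blast
  interpret frame d a c R by (rule fr)
  have "LG_morphism_deg d om (std_curve d a c) d"
    using LG_morphism_std_curve[OF ind] U V W assms(3-5,7) by simp
  then show ?thesis
  proof (rule ex1I[of _ "std_curve d a c", OF conjI])
    show "std_curve d a c (Some 0) = U \<and> std_curve d a c (Some 1) = V \<and> std_curve d a c None = W"
      using U V W by (simp add: std_curve_def)
    show "f = std_curve d a c"
      if "LG_morphism_deg d om f d \<and> f (Some 0) = U \<and> f (Some 1) = V \<and> f None = W" for f
      using that grass_morphism_eq_std_curve[OF assms(1) fr, of f] U V W
      unfolding LG_morphism_deg_def by simp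
  qed
qed

end
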